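(* Suppose $k_n\sim n^a$ for some $0<a<1$, and for some $0\le\delta<1-a$ there exist $\theta_{0n}=(\theta_{10n},\dots,\theta_{K(n)0n})$ with $\|f_{\theta_{0n}}-f_0\|_2=o(n^{-\delta})$ (A1). Let $h(\theta_n)=\int(f_{\theta_n}(\mathbf x)-f_0(\mathbf x))^2d\mathbf x$ and let $\tau>0$ be fixed. Then $\int h(\theta_n)q(\theta_n)d\theta_n=o(n^{-\delta})$ provided either 1. $\sum_{i=1}^{K(n)}\theta_{i0n}^2=o(n^{1-\delta})$ (A2) and $q(\theta_n)=\prod_{i=1}^{K(n)}\sqrt{n/(2\pi\tau^2)}\,e^{-n(\theta_{in}-\theta_{i0n})^2/(2\tau^2)}$; or 2. $\sum_{i=1}^{K(n)}\theta_{i0n}^2=O(n^v)$ for some $v\ge1$ (A3) and $q(\theta_n)=\prod_{i=1}^{K(n)}\sqrt{n^{v+1}/(2\pi\tau^2)}\,e^{-n^{v+1}(\theta_{in}-\theta_{i0n})^2/(2\tau^2)}$.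
   Context: $f_0$ is square integrable on $[0,1]^p$ ($p$ fixed); integrals in $\mathbf x$ are over $[0,1]^p$ and $\|\cdot\|_2$ is the $L_2([0,1]^p)$ norm. $\psi(u)=1/(1+e^{-u})$, $f_{\theta_n}(\mathbf x)=\beta_0+\sum_{j=1}^{k_n}\beta_j\psi(\gamma_{j0}+\sum_{h=1}^p\gamma_{jh}x_h)$, $\theta_n=(\theta_{1n},\dots,\theta_{K(n)n})$ the vector of all network parameters and $K(n)$ its length. *)

theory Defs
  imports "HOL-Probability.Probability" "HOL-Library.Landau_Symbols"
begin

definition psi :: "real \<Rightarrow> real" where
  "psi u = 1 / (1 + exp (- u))"

text \<open>Number of network parameters K(n) for k hidden units and input dimension p:
  beta_0, beta_1..beta_k, and gamma_{j0},...,gamma_{jp} for j = 1..k.\<close>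
definition nn_K :: "nat \<Rightarrow> nat \<Rightarrow> nat" where
  "nn_K p k = 1 + k * (p + 2)"

text \<open>Parameter layout in theta (indices 0 .. nn_K p k - 1):
  beta_0 = theta 0; beta_j = theta j (1 \<le> j \<le> k);
  gamma_{jh} = theta (k + (j-1)*(p+1) + 1 + h) (1 \<le> j \<le> k, 0 \<le> h \<le> p).
  Inputs x are indexed by {..<p}: x_h = x (h-1).\<close>
definition nn_f :: "nat \<Rightarrow> nat \<Rightarrow> (nat \<Rightarrow> real) \<Rightarrow> (nat \<Rightarrow> real) \<Rightarrow> real" where
  "nn_f p k \<theta> x = \<theta> 0 + (\<Sum>j=1..k. \<theta> j *
      psi (\<theta> (k + (j - 1) * (p + 1) + 1)
           + (\<Sum>h=1..p. \<theta> (k + (j - 1) * (p + 1) + 1 + h) * x (h - 1))))"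

definition cube_measure :: "nat \<Rightarrow> (nat \<Rightarrow> real) measure" where
  "cube_measure p = PiM {..<p} (\<lambda>_. lborel)"

definition unit_cube :: "nat \<Rightarrow> (nat \<Rightarrow> real) set" where
  "unit_cube p = PiE {..<p} (\<lambda>_. {0..1})"

definition sq_L2_dist :: "nat \<Rightarrow> ((nat \<Rightarrow> real) \<Rightarrow> real) \<Rightarrow> ((nat \<Rightarrow> real) \<Rightarrow> real) \<Rightarrow> real" where
  "sq_L2_dist p g f0 = (LINT x : unit_cube p | cube_measure p. (g x - f0 x)\<^sup>2)"

definition square_integrable_cube :: "nat \<Rightarrow> ((nat \<Rightarrow> real) \<Rightarrow> real) \<Rightarrow> bool" where
  "square_integrable_cube p f0 \<longleftrightarrow>
     set_borel_measurable (cube_measure p) (unit_cube p) f0 \<and>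
     set_integrable (cube_measure p) (unit_cube p) (\<lambda>x. (f0 x)\<^sup>2)"

definition nn_h :: "nat \<Rightarrow> nat \<Rightarrow> ((nat \<Rightarrow> real) \<Rightarrow> real) \<Rightarrow> (nat \<Rightarrow> real) \<Rightarrow> real" where
  "nn_h p k f0 \<theta> = sq_L2_dist p (nn_f p k \<theta>) f0"

definition gauss_prod :: "real \<Rightarrow> real \<Rightarrow> nat \<Rightarrow> (nat \<Rightarrow> real) \<Rightarrow> (nat \<Rightarrow> real) \<Rightarrow> real" where
  "gauss_prod s \<tau> K c \<theta> =
     (\<Prod>i<K. sqrt (s / (2 * pi * \<tau>\<^sup>2)) * exp (- s * (\<theta> i - c i)\<^sup>2 / (2 * \<tau>\<^sup>2)))"

definition param_measure :: "nat \<Rightarrow> (nat \<Rightarrow> real) measure" where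
  "param_measure K = PiM {..<K} (\<lambda>_. lborel)"

end

(*
  Write \<Delta> = \<theta> - \<theta>0.  Around \<theta>0 the network is f\<^sub>\<theta> = f\<^sub>\<theta>\<^sub>0 + \<nabla>f\<^sub>\<theta>\<^sub>0(x)\<cdot>\<Delta> + R, where R
  collects the products (\<Delta>\<beta>\<^sub>j)(\<Delta>\<psi>\<^sub>j) and the second-order Taylor remainders of \<psi>.  Since
  |\<psi>'| \<le> 1/4 and \<psi>' is 1/4-Lipschitz, R\<^sup>2 is bounded on [0,1]\<^sup>p by a quartic polynomial in \<Delta>,
  so h(\<theta>) \<le> 4 h(\<theta>0) + 4 \<integral>(\<nabla>f\<^sub>\<theta>\<^sub>0\<cdot>\<Delta>)\<^sup>2 + 4 (quartic).  Under the Gaussian prior with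
  variance \<sigma>\<^sup>2 = \<tau>\<^sup>2/s the cross terms of the quadratic form average out, leaving
  \<sigma>\<^sup>2 \<integral>|\<nabla>f\<^sub>\<theta>\<^sub>0|\<^sup>2 \<le> \<sigma>\<^sup>2 (k + 1 + (p + 1) |\<theta>0|\<^sup>2 / 16), while the quartic has mean
  O(\<sigma>\<^sup>4 (k\<^sup>2 + k |\<theta>0|\<^sup>2)).  For both priors \<sigma>\<^sup>2 = O(1/n) and \<sigma>\<^sup>2 |\<theta>0|\<^sup>2 = o(n\<^sup>-\<^sup>\<delta>), and
  k ~ n\<^sup>a with a < 1 - \<delta>, so every term is o(n\<^sup>-\<^sup>\<delta>); h(\<theta>0) = o(n\<^sup>-\<^sup>2\<^sup>\<delta>) by (A1).
*)
theory Submission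
  imports Defs
begin

section \<open>Moments of the Gaussian prior\<close>

definition normal_central_moment :: "real \<Rightarrow> nat \<Rightarrow> real" where
  "normal_central_moment \<sigma> n =
     (if odd n then 0 else fact n / ((2 / \<sigma>\<^sup>2) ^ (n div 2) * fact (n div 2)))"

lemma integral_normal_central_moment:
  assumes "0 < \<sigma>"
  shows "(\<integral>t. normal_density \<mu> \<sigma> t * (t - \<mu>) ^ n \<partial>lborel) = normal_central_moment \<sigma> n"
proof (cases "even n")
  case True
  then obtain m where "n = 2 * m" by (elim evenE)
  then show ?thesis
    using integral_normal_moment_even[OF assms] by (simp add: normal_central_moment_def)
next
  case False
  then obtain m where "n = 2 * m + 1" by (elim oddE)
  then show ?thesis
    using integral_normal_moment_odd[OF assms] by (simp add: normal_central_moment_def)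
qed

lemma normal_central_moment_0 [simp]: "normal_central_moment \<sigma> 0 = 1"
  and normal_central_moment_Suc_0 [simp]: "normal_central_moment \<sigma> (Suc 0) = 0"
  and normal_central_moment_2 [simp]: "\<sigma> \<noteq> 0 \<Longrightarrow> normal_central_moment \<sigma> 2 = \<sigma>\<^sup>2"
  and normal_central_moment_4 [simp]: "\<sigma> \<noteq> 0 \<Longrightarrow> normal_central_moment \<sigma> 4 = 3 * (\<sigma>\<^sup>2)\<^sup>2"
  by (simp_all add: normal_central_moment_def fact_numeral field_simps)

lemma gauss_prod_eq_prod_normal_density:
  assumes "0 < s" "0 < \<tau>"
  shows "gauss_prod s \<tau> K c \<theta> = (\<Prod>i<K. normal_density (c i) (\<tau> / sqrt s) (\<theta> i))"
proof -
  have "(\<tau> / sqrt s)\<^sup>2 = \<tau>\<^sup>2 / s"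
    using assms by (simp add: power_divide)
  then show ?thesis
    using assms by (simp add: gauss_prod_def normal_density_def real_sqrt_divide field_simps)
qed

lemma gauss_prod_nonneg: "0 \<le> s \<Longrightarrow> 0 \<le> gauss_prod s \<tau> K c \<theta>"
  unfolding gauss_prod_def by (intro prod_nonneg) auto

lemma gauss_prod_measurable [measurable]: "gauss_prod s \<tau> K c \<in> borel_measurable (param_measure K)"
  unfolding gauss_prod_def param_measure_def by measurable

lemma gauss_prod_moment:
  assumes "0 < s" "0 < \<tau>"
  shows "integrable (param_measure K) (\<lambda>\<theta>. (\<Prod>i<K. (\<theta> i - c i) ^ e i) * gauss_prod s \<tau> K c \<theta>)"
    and "(\<integral>\<theta>. (\<Prod>i<K. (\<theta> i - c i) ^ e i) * gauss_prod s \<tau> K c \<theta> \<partial>param_measure K)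
           = (\<Prod>i<K. normal_central_moment (\<tau> / sqrt s) (e i))"
proof -
  interpret product_sigma_finite "\<lambda>_::nat. lborel :: real measure" by standard
  define f where "f i t = normal_density (c i) (\<tau> / sqrt s) t * (t - c i) ^ e i" for i t
  have \<sigma>: "0 < \<tau> / sqrt s" using assms by simp
  have integrand: "(\<lambda>\<theta>. (\<Prod>i<K. (\<theta> i - c i) ^ e i) * gauss_prod s \<tau> K c \<theta>) = (\<lambda>\<theta>. \<Prod>i<K. f i (\<theta> i))"
    using assms by (simp add: f_def gauss_prod_eq_prod_normal_density prod.distrib mult.commute)
  have f: "integrable lborel (f i)" for i
    unfolding f_def using \<sigma> by (rule integrable_normal_moment)
  show "integrable (param_measure K) (\<lambda>\<theta>. (\<Prod>i<K. (\<theta> i - c i) ^ e i) * gauss_prod s \<tau> K c \<theta>)"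
    unfolding integrand param_measure_def using f by (intro product_integrable_prod) auto
  show "(\<integral>\<theta>. (\<Prod>i<K. (\<theta> i - c i) ^ e i) * gauss_prod s \<tau> K c \<theta> \<partial>param_measure K)
           = (\<Prod>i<K. normal_central_moment (\<tau> / sqrt s) (e i))"
    unfolding integrand param_measure_def using f
    by (subst product_integral_prod)
      (simp_all add: f_def[abs_def] integral_normal_central_moment[OF \<sigma>])
qed

lemma prod_lessThan_power_if:
  fixes x :: "nat \<Rightarrow> 'a::comm_monoid_mult"
  assumes "i < K"
  shows "(\<Prod>l<K. x l ^ (if l = i then n else 0)) = x i ^ n"
proof -
  have "(\<Prod>l<K. x l ^ (if l = i then n else 0)) = (\<Prod>l<K. if l = i then x l ^ n else 1)"
    by (intro prod.cong) auto
  then show ?thesis using assms by (simp add: prod.delta)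
qed

lemma gauss_prod_moment_single:
  assumes "0 < s" "0 < \<tau>" "i < K"
  shows "integrable (param_measure K) (\<lambda>\<theta>. (\<theta> i - c i) ^ n * gauss_prod s \<tau> K c \<theta>)"
    and "(\<integral>\<theta>. (\<theta> i - c i) ^ n * gauss_prod s \<tau> K c \<theta> \<partial>param_measure K)
           = normal_central_moment (\<tau> / sqrt s) n"
proof -
  have "(\<Prod>l<K. normal_central_moment (\<tau> / sqrt s) (if l = i then n else 0))
      = normal_central_moment (\<tau> / sqrt s) n"
    using assms(3) by (simp add: if_distrib prod.delta cong: if_cong)
  then show "integrable (param_measure K) (\<lambda>\<theta>. (\<theta> i - c i) ^ n * gauss_prod s \<tau> K c \<theta>)"
    and "(\<integral>\<theta>. (\<theta> i - c i) ^ n * gauss_prod s \<tau> K c \<theta> \<partial>param_measure K)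
           = normal_central_moment (\<tau> / sqrt s) n"
    using gauss_prod_moment[OF assms(1,2), of K c "\<lambda>l. if l = i then n else 0"]
    by (simp_all add: prod_lessThan_power_if[OF assms(3)])
qed

lemma gauss_prod_moment_pair:
  assumes "0 < s" "0 < \<tau>" "i < K" "j < K" "i \<noteq> j"
  shows "integrable (param_measure K)
           (\<lambda>\<theta>. (\<theta> i - c i) ^ n * (\<theta> j - c j) ^ m * gauss_prod s \<tau> K c \<theta>)"
    and "(\<integral>\<theta>. (\<theta> i - c i) ^ n * (\<theta> j - c j) ^ m * gauss_prod s \<tau> K c \<theta> \<partial>param_measure K)
           = normal_central_moment (\<tau> / sqrt s) n * normal_central_moment (\<tau> / sqrt s) m"
proof -
  define e where "e l = (if l = i then n else 0) + (if l = j then m else 0)" for l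
  have "(\<Prod>l<K. x l ^ e l) = x i ^ n * x j ^ m" for x :: "nat \<Rightarrow> real"
    using prod_lessThan_power_if[OF assms(3), of x n] prod_lessThan_power_if[OF assms(4), of x m]
    by (simp add: e_def power_add prod.distrib)
  moreover have "(\<Prod>l<K. normal_central_moment (\<tau> / sqrt s) (e l))
      = normal_central_moment (\<tau> / sqrt s) n * normal_central_moment (\<tau> / sqrt s) m"
  proof -
    have "(\<Prod>l<K. normal_central_moment (\<tau> / sqrt s) (e l))
        = (\<Prod>l<K. (if l = i then normal_central_moment (\<tau> / sqrt s) n else 1)
                 * (if l = j then normal_central_moment (\<tau> / sqrt s) m else 1))"
      using assms(5) by (intro prod.cong) (auto simp: e_def)
    then show ?thesis using assms(3,4) by (simp add: prod.distrib prod.delta)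
  qed
  ultimately show "integrable (param_measure K)
           (\<lambda>\<theta>. (\<theta> i - c i) ^ n * (\<theta> j - c j) ^ m * gauss_prod s \<tau> K c \<theta>)"
    and "(\<integral>\<theta>. (\<theta> i - c i) ^ n * (\<theta> j - c j) ^ m * gauss_prod s \<tau> K c \<theta> \<partial>param_measure K)
           = normal_central_moment (\<tau> / sqrt s) n * normal_central_moment (\<tau> / sqrt s) m"
    using gauss_prod_moment[OF assms(1,2), of K c e] by simp_all
qed

lemma gauss_prod_integral:
  assumes "0 < s" "0 < \<tau>"
  shows "integrable (param_measure K) (gauss_prod s \<tau> K c)"
    and "(\<integral>\<theta>. gauss_prod s \<tau> K c \<theta> \<partial>param_measure K) = 1"
  using gauss_prod_moment[OF assms, of K c "\<lambda>_. 0"] by simp_all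

lemma gauss_prod_covariance:
  assumes "0 < s" "0 < \<tau>" "i < K" "j < K"
  shows "integrable (param_measure K) (\<lambda>\<theta>. (\<theta> i - c i) * (\<theta> j - c j) * gauss_prod s \<tau> K c \<theta>)"
    and "(\<integral>\<theta>. (\<theta> i - c i) * (\<theta> j - c j) * gauss_prod s \<tau> K c \<theta> \<partial>param_measure K)
           = (if i = j then \<tau>\<^sup>2 / s else 0)"
proof -
  have var: "(\<tau> / sqrt s)\<^sup>2 = \<tau>\<^sup>2 / s"
    using assms by (simp add: power_divide)
  show "integrable (param_measure K) (\<lambda>\<theta>. (\<theta> i - c i) * (\<theta> j - c j) * gauss_prod s \<tau> K c \<theta>)"
    using gauss_prod_moment_single(1)[OF assms(1-3), of c 2]
      gauss_prod_moment_pair(1)[OF assms, of c 1 1]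
    by (cases "i = j") (simp_all add: power2_eq_square)
  show "(\<integral>\<theta>. (\<theta> i - c i) * (\<theta> j - c j) * gauss_prod s \<tau> K c \<theta> \<partial>param_measure K)
           = (if i = j then \<tau>\<^sup>2 / s else 0)"
    using gauss_prod_moment_single(2)[OF assms(1-3), of c 2]
      gauss_prod_moment_pair(2)[OF assms, of c 1 1] assms(1,2)
    by (cases "i = j") (simp_all add: power2_eq_square flip: var)
qed

lemma gauss_prod_fourth_moment_le:
  assumes "0 < s" "0 < \<tau>" "i < K" "j < K"
  shows "integrable (param_measure K) (\<lambda>\<theta>. (\<theta> i - c i)\<^sup>2 * (\<theta> j - c j)\<^sup>2 * gauss_prod s \<tau> K c \<theta>)"
    and "(\<integral>\<theta>. (\<theta> i - c i)\<^sup>2 * (\<theta> j - c j)\<^sup>2 * gauss_prod s \<tau> K c \<theta> \<partial>param_measure K)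
           \<le> 3 * (\<tau>\<^sup>2 / s)\<^sup>2"
proof -
  have var: "(\<tau> / sqrt s)\<^sup>2 = \<tau>\<^sup>2 / s"
    using assms by (simp add: power_divide)
  have sq_sq: "x\<^sup>2 * x\<^sup>2 = x ^ 4" for x :: real
    by algebra
  have "integrable (param_measure K) (\<lambda>\<theta>. (\<theta> i - c i)\<^sup>2 * (\<theta> j - c j)\<^sup>2 * gauss_prod s \<tau> K c \<theta>)
    \<and> (\<integral>\<theta>. (\<theta> i - c i)\<^sup>2 * (\<theta> j - c j)\<^sup>2 * gauss_prod s \<tau> K c \<theta> \<partial>param_measure K)
           \<le> 3 * (\<tau>\<^sup>2 / s)\<^sup>2"
  proof (cases "i = j")
    case True
    then show ?thesis
      using gauss_prod_moment_single[OF assms(1-3), of c 4] assms(1,2) by (simp add: sq_sq var)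
  next
    case False
    have "normal_central_moment (\<tau> / sqrt s) 2 * normal_central_moment (\<tau> / sqrt s) 2
        \<le> 3 * (\<tau>\<^sup>2 / s)\<^sup>2"
      using assms(1,2) zero_le_power2[of "\<tau>\<^sup>2 / s"] by (simp add: var flip: power2_eq_square)
    then show ?thesis
      using gauss_prod_moment_pair[OF assms False, of c 2 2] by simp
  qed
  then show "integrable (param_measure K) (\<lambda>\<theta>. (\<theta> i - c i)\<^sup>2 * (\<theta> j - c j)\<^sup>2 * gauss_prod s \<tau> K c \<theta>)"
    and "(\<integral>\<theta>. (\<theta> i - c i)\<^sup>2 * (\<theta> j - c j)\<^sup>2 * gauss_prod s \<tau> K c \<theta> \<partial>param_measure K)
           \<le> 3 * (\<tau>\<^sup>2 / s)\<^sup>2"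
    by blast+
qed

lemma gauss_prod_quadratic_form:
  assumes "0 < s" "0 < \<tau>" "finite S" "inj_on \<iota> S" "\<iota> ` S \<subseteq> {..<K}"
  shows "integrable (param_measure K) (\<lambda>\<theta>. (\<Sum>m\<in>S. \<Sum>m'\<in>S.
           M m m' * (\<theta> (\<iota> m) - c (\<iota> m)) * (\<theta> (\<iota> m') - c (\<iota> m'))) * gauss_prod s \<tau> K c \<theta>)"
    and "(\<integral>\<theta>. (\<Sum>m\<in>S. \<Sum>m'\<in>S. M m m' * (\<theta> (\<iota> m) - c (\<iota> m)) * (\<theta> (\<iota> m') - c (\<iota> m')))
           * gauss_prod s \<tau> K c \<theta> \<partial>param_measure K) = \<tau>\<^sup>2 / s * (\<Sum>m\<in>S. M m m)"
proof -
  define F where "F m m' \<theta> =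
    M m m' * ((\<theta> (\<iota> m) - c (\<iota> m)) * (\<theta> (\<iota> m') - c (\<iota> m')) * gauss_prod s \<tau> K c \<theta>)" for m m' \<theta>
  have integrand: "(\<lambda>\<theta>. (\<Sum>m\<in>S. \<Sum>m'\<in>S. M m m' * (\<theta> (\<iota> m) - c (\<iota> m)) * (\<theta> (\<iota> m') - c (\<iota> m')))
      * gauss_prod s \<tau> K c \<theta>) = (\<lambda>\<theta>. \<Sum>m\<in>S. \<Sum>m'\<in>S. F m m' \<theta>)"
    by (simp add: F_def sum_distrib_left sum_distrib_right mult_ac)
  have idx: "\<iota> m < K" if "m \<in> S" for m
    using assms(5) that by auto
  have F: "integrable (param_measure K) (F m m')"
    "integral\<^sup>L (param_measure K) (F m m') = (if m = m' then M m m * (\<tau>\<^sup>2 / s) else 0)"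
    if "m \<in> S" "m' \<in> S" for m m'
    using gauss_prod_covariance[OF assms(1,2) idx idx, OF that, of c] inj_onD[OF assms(4) _ that]
    by (auto simp: F_def[abs_def])
  show "integrable (param_measure K) (\<lambda>\<theta>. (\<Sum>m\<in>S. \<Sum>m'\<in>S.
           M m m' * (\<theta> (\<iota> m) - c (\<iota> m)) * (\<theta> (\<iota> m') - c (\<iota> m'))) * gauss_prod s \<tau> K c \<theta>)"
    unfolding integrand using F by (intro Bochner_Integration.integrable_sum) auto
  have "(\<integral>\<theta>. (\<Sum>m\<in>S. \<Sum>m'\<in>S. F m m' \<theta>) \<partial>param_measure K)
      = (\<Sum>m\<in>S. \<Sum>m'\<in>S. integral\<^sup>L (param_measure K) (F m m'))"
    using F by (simp add: Bochner_Integration.integral_sum Bochner_Integration.integrable_sum)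
  also have "\<dots> = (\<Sum>m\<in>S. \<Sum>m'\<in>S. if m = m' then M m m * (\<tau>\<^sup>2 / s) else 0)"
    using F by (intro sum.cong) auto
  also have "\<dots> = \<tau>\<^sup>2 / s * (\<Sum>m\<in>S. M m m)"
    using assms(3) by (simp add: sum_distrib_left mult.commute)
      (simp add: sum_divide_distrib sum_distrib_right)
  finally show "(\<integral>\<theta>. (\<Sum>m\<in>S. \<Sum>m'\<in>S. M m m' * (\<theta> (\<iota> m) - c (\<iota> m)) * (\<theta> (\<iota> m') - c (\<iota> m')))
           * gauss_prod s \<tau> K c \<theta> \<partial>param_measure K) = \<tau>\<^sup>2 / s * (\<Sum>m\<in>S. M m m)"
    unfolding integrand .
qed

lemma gauss_prod_sum_sq_sq_le:
  assumes "0 < s" "0 < \<tau>" "finite I" "\<alpha> ` I \<subseteq> {..<K}" "\<beta> ` I \<subseteq> {..<K}"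
  shows "integrable (param_measure K) (\<lambda>\<theta>.
           (\<Sum>m\<in>I. (\<theta> (\<alpha> m) - c (\<alpha> m))\<^sup>2 * (\<theta> (\<beta> m) - c (\<beta> m))\<^sup>2) * gauss_prod s \<tau> K c \<theta>)"
    and "(\<integral>\<theta>. (\<Sum>m\<in>I. (\<theta> (\<alpha> m) - c (\<alpha> m))\<^sup>2 * (\<theta> (\<beta> m) - c (\<beta> m))\<^sup>2) * gauss_prod s \<tau> K c \<theta>
           \<partial>param_measure K) \<le> 3 * (\<tau>\<^sup>2 / s)\<^sup>2 * card I"
proof -
  define F where "F m \<theta> = (\<theta> (\<alpha> m) - c (\<alpha> m))\<^sup>2 * (\<theta> (\<beta> m) - c (\<beta> m))\<^sup>2 * gauss_prod s \<tau> K c \<theta>"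
    for m \<theta>
  have integrand: "(\<lambda>\<theta>. (\<Sum>m\<in>I. (\<theta> (\<alpha> m) - c (\<alpha> m))\<^sup>2 * (\<theta> (\<beta> m) - c (\<beta> m))\<^sup>2)
      * gauss_prod s \<tau> K c \<theta>) = (\<lambda>\<theta>. \<Sum>m\<in>I. F m \<theta>)"
    by (simp add: F_def sum_distrib_right)
  have F: "integrable (param_measure K) (F m)" "integral\<^sup>L (param_measure K) (F m) \<le> 3 * (\<tau>\<^sup>2 / s)\<^sup>2"
    if "m \<in> I" for m
    using gauss_prod_fourth_moment_le[OF assms(1,2), of "\<alpha> m" K "\<beta> m" c] assms(4,5) that
    by (auto simp: F_def[abs_def])
  show "integrable (param_measure K) (\<lambda>\<theta>.
           (\<Sum>m\<in>I. (\<theta> (\<alpha> m) - c (\<alpha> m))\<^sup>2 * (\<theta> (\<beta> m) - c (\<beta> m))\<^sup>2) * gauss_prod s \<tau> K c \<theta>)"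
    unfolding integrand using F by (intro Bochner_Integration.integrable_sum) auto
  have "(\<integral>\<theta>. (\<Sum>m\<in>I. F m \<theta>) \<partial>param_measure K) = (\<Sum>m\<in>I. integral\<^sup>L (param_measure K) (F m))"
    using F by (intro Bochner_Integration.integral_sum) auto
  also have "\<dots> \<le> (\<Sum>m\<in>I. 3 * (\<tau>\<^sup>2 / s)\<^sup>2)"
    using F by (intro sum_mono) auto
  also have "\<dots> = 3 * (\<tau>\<^sup>2 / s)\<^sup>2 * card I"
    by simp
  finally show "(\<integral>\<theta>. (\<Sum>m\<in>I. (\<theta> (\<alpha> m) - c (\<alpha> m))\<^sup>2 * (\<theta> (\<beta> m) - c (\<beta> m))\<^sup>2)
      * gauss_prod s \<tau> K c \<theta> \<partial>param_measure K) \<le> 3 * (\<tau>\<^sup>2 / s)\<^sup>2 * card I"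
    unfolding integrand .
qed

lemma (in prob_space) integral_sq_linear_combination:
  fixes a :: "'m \<Rightarrow> 'a \<Rightarrow> real"
  assumes "finite S" "\<And>m. m \<in> S \<Longrightarrow> a m \<in> borel_measurable M"
    and "\<And>m x. m \<in> S \<Longrightarrow> x \<in> space M \<Longrightarrow> \<bar>a m x\<bar> \<le> A m"
  shows "integrable M (\<lambda>x. (\<Sum>m\<in>S. a m x * w m)\<^sup>2)"
    and "(\<integral>x. (\<Sum>m\<in>S. a m x * w m)\<^sup>2 \<partial>M)
           = (\<Sum>m\<in>S. \<Sum>m'\<in>S. (\<integral>x. a m x * a m' x \<partial>M) * w m * w m')"
    and "\<And>m. m \<in> S \<Longrightarrow> (\<integral>x. a m x * a m x \<partial>M) \<le> (A m)\<^sup>2"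
proof -
  have a: "integrable M (\<lambda>x. a m x * a m' x)" if "m \<in> S" "m' \<in> S" for m m'
  proof (rule integrable_const_bound)
    show "AE x in M. norm (a m x * a m' x) \<le> A m * A m'"
      using assms(3)[OF that(1)] assms(3)[OF that(2)]
      by (intro AE_I2) (auto simp: abs_mult intro: mult_mono')
  qed (use assms(2) that in auto)
  have square: "(\<lambda>x. (\<Sum>m\<in>S. a m x * w m)\<^sup>2) = (\<lambda>x. \<Sum>m\<in>S. \<Sum>m'\<in>S. w m * w m' * (a m x * a m' x))"
    by (simp add: power2_eq_square sum_product mult_ac)
  show "integrable M (\<lambda>x. (\<Sum>m\<in>S. a m x * w m)\<^sup>2)"
    unfolding square using a by (intro Bochner_Integration.integrable_sum integrable_mult_right) auto
  show "(\<integral>x. (\<Sum>m\<in>S. a m x * w m)\<^sup>2 \<partial>M)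
           = (\<Sum>m\<in>S. \<Sum>m'\<in>S. (\<integral>x. a m x * a m' x \<partial>M) * w m * w m')"
    unfolding square using a by (simp add: integral_sum integrable_sum mult_ac)
  show "(\<integral>x. a m x * a m x \<partial>M) \<le> (A m)\<^sup>2" if "m \<in> S" for m
  proof (intro integral_le_const AE_I2)
    fix x assume "x \<in> space M"
    then have "\<bar>a m x\<bar>\<^sup>2 \<le> (A m)\<^sup>2"
      using assms(3)[OF that] by (intro power_mono) auto
    then show "a m x * a m x \<le> (A m)\<^sup>2"
      by (simp add: power2_eq_square)
  qed (use a[OF that that] in auto)
qed

text \<open>The Gaussian average of the squared linear part is computed by integrating over the input
  first: this leaves a quadratic form in \<open>\<theta> - c\<close>, whose Gaussian mean is its trace.\<close>

lemma gauss_prod_sq_linear_form_le: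
  fixes a :: "'m \<Rightarrow> 'x \<Rightarrow> real"
  assumes N: "prob_space N" and s: "0 < s" "0 < \<tau>"
    and S: "finite S" "inj_on \<iota> S" "\<iota> ` S \<subseteq> {..<K}"
    and a: "\<And>m. m \<in> S \<Longrightarrow> a m \<in> borel_measurable N"
      "\<And>m x. m \<in> S \<Longrightarrow> x \<in> space N \<Longrightarrow> \<bar>a m x\<bar> \<le> A m"
  shows "integrable (param_measure K) (\<lambda>\<theta>.
           (\<integral>x. (\<Sum>m\<in>S. a m x * (\<theta> (\<iota> m) - c (\<iota> m)))\<^sup>2 \<partial>N) * gauss_prod s \<tau> K c \<theta>)"
    and "(\<integral>\<theta>. (\<integral>x. (\<Sum>m\<in>S. a m x * (\<theta> (\<iota> m) - c (\<iota> m)))\<^sup>2 \<partial>N) * gauss_prod s \<tau> K c \<theta>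
           \<partial>param_measure K) \<le> \<tau>\<^sup>2 / s * (\<Sum>m\<in>S. (A m)\<^sup>2)"
proof -
  interpret prob_space N by (fact N)
  define M where "M m m' = (\<integral>x. a m x * a m' x \<partial>N)" for m m'
  have form: "(\<integral>x. (\<Sum>m\<in>S. a m x * (\<theta> (\<iota> m) - c (\<iota> m)))\<^sup>2 \<partial>N)
      = (\<Sum>m\<in>S. \<Sum>m'\<in>S. M m m' * (\<theta> (\<iota> m) - c (\<iota> m)) * (\<theta> (\<iota> m') - c (\<iota> m')))" for \<theta>
    unfolding M_def by (rule integral_sq_linear_combination(2)[OF S(1) a])
  note quadratic = gauss_prod_quadratic_form[OF s S, of M c]
  show "integrable (param_measure K) (\<lambda>\<theta>.
           (\<integral>x. (\<Sum>m\<in>S. a m x * (\<theta> (\<iota> m) - c (\<iota> m)))\<^sup>2 \<partial>N) * gauss_prod s \<tau> K c \<theta>)"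
    unfolding form by (fact quadratic(1))
  have "M m m \<le> (A m)\<^sup>2" if "m \<in> S" for m
    unfolding M_def by (rule integral_sq_linear_combination(3)[OF S(1) a that])
  then have "\<tau>\<^sup>2 / s * (\<Sum>m\<in>S. M m m) \<le> \<tau>\<^sup>2 / s * (\<Sum>m\<in>S. (A m)\<^sup>2)"
    using s by (intro mult_left_mono sum_mono) auto
  then show "(\<integral>\<theta>. (\<integral>x. (\<Sum>m\<in>S. a m x * (\<theta> (\<iota> m) - c (\<iota> m)))\<^sup>2 \<partial>N) * gauss_prod s \<tau> K c \<theta>
           \<partial>param_measure K) \<le> \<tau>\<^sup>2 / s * (\<Sum>m\<in>S. (A m)\<^sup>2)"
    unfolding form quadratic(2) .
qed

section \<open>The logistic activation\<close>

definition psi' :: "real \<Rightarrow> real" where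
  "psi' u = psi u * (1 - psi u)"

lemma psi_pos: "0 < psi u"
  and psi_less_1: "psi u < 1"
  by (auto simp: psi_def add_pos_pos)

lemma abs_psi_le_1: "\<bar>psi u\<bar> \<le> 1"
  using psi_pos[of u] psi_less_1[of u] by auto

lemma psi_has_real_derivative: "(psi has_real_derivative psi' u) (at u)"
proof -
  have pos: "0 < 1 + exp (- u)"
    by (simp add: add_pos_pos)
  have "((\<lambda>u. 1 / (1 + exp (- u))) has_real_derivative exp (- u) / (1 + exp (- u))\<^sup>2) (at u)"
    using pos by (auto intro!: derivative_eq_intros simp: power2_eq_square)
  moreover have "exp (- u) / (1 + exp (- u))\<^sup>2 = psi' u"
    using pos by (simp add: psi'_def psi_def divide_simps power2_eq_square)
  ultimately show ?thesis
    unfolding psi_def[abs_def] by simp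
qed

lemma abs_psi'_le: "\<bar>psi' u\<bar> \<le> 1 / 4"
proof -
  have "0 \<le> (psi u - 1 / 2)\<^sup>2"
    by simp
  then show ?thesis
    using psi_pos[of u] psi_less_1[of u] by (simp add: psi'_def power2_eq_square algebra_simps)
qed

lemma psi_mean_value:
  obtains z where "psi b - psi a = (b - a) * psi' z" and "\<bar>z - a\<bar> \<le> \<bar>b - a\<bar>"
proof (cases a b rule: linorder_cases)
  case less
  then show ?thesis
    using MVT2[of a b psi psi'] psi_has_real_derivative that by force
next
  case equal
  then show ?thesis
    using that by simp
next
  case greater
  then obtain z where "b < z" "z < a" "psi a - psi b = (a - b) * psi' z"
    using MVT2[of b a psi psi'] psi_has_real_derivative by blast
  then show ?thesis
    using that[of z] by (simp add: algebra_simps)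
qed

lemma psi_lipschitz: "\<bar>psi b - psi a\<bar> \<le> \<bar>b - a\<bar> / 4"
proof -
  obtain z where "psi b - psi a = (b - a) * psi' z"
    by (rule psi_mean_value)
  moreover have "\<bar>b - a\<bar> * \<bar>psi' z\<bar> \<le> \<bar>b - a\<bar> * (1 / 4)"
    using abs_psi'_le[of z] by (rule mult_left_mono) simp
  ultimately show ?thesis
    by (simp add: abs_mult)
qed

lemma psi'_lipschitz: "\<bar>psi' b - psi' a\<bar> \<le> \<bar>b - a\<bar> / 4"
proof -
  have "psi' b - psi' a = (psi b - psi a) * (1 - psi a - psi b)"
    by (simp add: psi'_def algebra_simps)
  moreover have "\<bar>1 - psi a - psi b\<bar> \<le> 1"
    using psi_pos[of a] psi_less_1[of a] psi_pos[of b] psi_less_1[of b] by auto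
  ultimately have "\<bar>psi' b - psi' a\<bar> \<le> \<bar>psi b - psi a\<bar>"
    by (simp add: abs_mult mult_left_le)
  then show ?thesis
    using psi_lipschitz[of b a] by simp
qed

lemma psi_taylor_remainder: "\<bar>psi b - psi a - psi' a * (b - a)\<bar> \<le> (b - a)\<^sup>2 / 4"
proof -
  obtain z where z: "psi b - psi a = (b - a) * psi' z" "\<bar>z - a\<bar> \<le> \<bar>b - a\<bar>"
    by (rule psi_mean_value)
  have "\<bar>psi' z - psi' a\<bar> \<le> \<bar>b - a\<bar> / 4"
    using psi'_lipschitz[of z a] z(2) by simp
  then have "\<bar>b - a\<bar> * \<bar>psi' z - psi' a\<bar> \<le> \<bar>b - a\<bar> * (\<bar>b - a\<bar> / 4)"
    by (rule mult_left_mono) simp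
  moreover have "psi b - psi a - psi' a * (b - a) = (b - a) * (psi' z - psi' a)"
    using z(1) by (simp add: algebra_simps)
  ultimately show ?thesis
    by (simp add: abs_mult power2_eq_square abs_mult_self_eq)
qed

lemma psi_measurable [measurable]: "psi \<in> borel_measurable borel"
  and psi'_measurable [measurable]: "psi' \<in> borel_measurable borel"
  unfolding psi_def[abs_def] psi'_def[abs_def] by measurable

section \<open>The input distribution\<close>

definition unit_cube_measure :: "nat \<Rightarrow> (nat \<Rightarrow> real) measure" where
  "unit_cube_measure p = restrict_space (cube_measure p) (unit_cube p)"

lemma unit_cube_sets: "unit_cube p \<inter> space (cube_measure p) \<in> sets (cube_measure p)"
proof -
  have "unit_cube p \<in> sets (cube_measure p)"
    unfolding unit_cube_def cube_measure_def by (rule sets_PiM_I_finite) auto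
  then show ?thesis
    by (simp add: sets.Int_space_eq2)
qed

lemma space_unit_cube_measure: "space (unit_cube_measure p) = unit_cube p"
  unfolding unit_cube_measure_def space_restrict_space cube_measure_def space_PiM unit_cube_def
  by (auto simp: PiE_def Pi_def)

lemma prob_space_unit_cube_measure: "prob_space (unit_cube_measure p)"
proof
  interpret product_sigma_finite "\<lambda>_::nat. lborel :: real measure" by standard
  have "emeasure (unit_cube_measure p) (space (unit_cube_measure p)) = emeasure (cube_measure p) (unit_cube p)"
    unfolding space_unit_cube_measure unfolding unit_cube_measure_def
    by (rule emeasure_restrict_space[OF unit_cube_sets]) simp
  also have "\<dots> = (\<Prod>i<p. emeasure lborel {0..(1::real)})"
    unfolding cube_measure_def unit_cube_def by (rule emeasure_PiM) auto
  finally show "emeasure (unit_cube_measure p) (space (unit_cube_measure p)) = 1"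
    by simp
qed

lemma sq_L2_dist_eq_integral: "sq_L2_dist p g f0 = (\<integral>x. (g x - f0 x)\<^sup>2 \<partial>unit_cube_measure p)"
  unfolding sq_L2_dist_def set_lebesgue_integral_def unit_cube_measure_def
  by (rule integral_restrict_space[OF unit_cube_sets, symmetric])

lemma square_integrable_cubeD:
  assumes "square_integrable_cube p f0"
  shows "f0 \<in> borel_measurable (unit_cube_measure p)"
    and "integrable (unit_cube_measure p) (\<lambda>x. (f0 x)\<^sup>2)"
  using assms
  unfolding square_integrable_cube_def set_borel_measurable_def set_integrable_def unit_cube_measure_def
  by (simp_all add: borel_measurable_restrict_space_iff[OF unit_cube_sets]
      integrable_restrict_space[OF unit_cube_sets])

lemma nn_h_nonneg: "0 \<le> nn_h p k f0 \<theta>"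
  unfolding nn_h_def sq_L2_dist_eq_integral by simp

text \<open>Off \<open>I\<close> the coordinate is the constant \<open>undefined\<close> on the extensional space of \<open>Pi\<^sub>M\<close>.\<close>

lemma PiM_lborel_component_measurable:
  "(\<lambda>x. x i) \<in> borel_measurable (Pi\<^sub>M I (\<lambda>_. lborel :: real measure))"
proof (cases "i \<in> I")
  case True
  then show ?thesis by simp
next
  case False
  have "(\<lambda>x. x i) \<in> borel_measurable (Pi\<^sub>M I (\<lambda>_. lborel :: real measure))
      \<longleftrightarrow> (\<lambda>_. undefined :: real) \<in> borel_measurable (Pi\<^sub>M I (\<lambda>_. lborel :: real measure))"
    using False by (intro measurable_cong) (auto simp: space_PiM PiE_def extensional_def)
  then show ?thesis
    by simp
qed

lemma unit_cube_component_measurable [measurable]: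
  "(\<lambda>x. x i) \<in> borel_measurable (unit_cube_measure p)"
  unfolding unit_cube_measure_def cube_measure_def
  by (intro measurable_restrict_space1 PiM_lborel_component_measurable)

lemma param_component_measurable [measurable]: "(\<lambda>\<theta>. \<theta> i) \<in> borel_measurable (param_measure K)"
  unfolding param_measure_def by (rule PiM_lborel_component_measurable)

lemma unit_cube_coordinate:
  "x \<in> space (unit_cube_measure p) \<Longrightarrow> i < p \<Longrightarrow> 0 \<le> x i \<and> x i \<le> 1"
  by (auto simp: space_unit_cube_measure unit_cube_def PiE_def Pi_def)

section \<open>Linearisation of the network\<close>

text \<open>\<open>aug_input\<close> prepends the constant \<open>1\<close> to the input, so that the bias \<open>\<gamma>\<^sub>j\<^sub>0\<close> becomes an
  ordinary weight.\<close>

definition gamma_index :: "nat \<Rightarrow> nat \<Rightarrow> nat \<Rightarrow> nat \<Rightarrow> nat" where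
  "gamma_index p k j h = k + (j - 1) * (p + 1) + 1 + h"

definition aug_input :: "(nat \<Rightarrow> real) \<Rightarrow> nat \<Rightarrow> real" where
  "aug_input x h = (if h = 0 then 1 else x (h - 1))"

definition preact :: "nat \<Rightarrow> nat \<Rightarrow> (nat \<Rightarrow> real) \<Rightarrow> nat \<Rightarrow> (nat \<Rightarrow> real) \<Rightarrow> real" where
  "preact p k \<theta> j x = (\<Sum>h\<le>p. \<theta> (gamma_index p k j h) * aug_input x h)"

lemma nn_f_eq_preact: "nn_f p k \<theta> x = \<theta> 0 + (\<Sum>j=1..k. \<theta> j * psi (preact p k \<theta> j x))"
proof -
  have "preact p k \<theta> j x = \<theta> (k + (j - 1) * (p + 1) + 1)
      + (\<Sum>h=1..p. \<theta> (k + (j - 1) * (p + 1) + 1 + h) * x (h - 1))" for j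
  proof -
    have "{..p} = insert 0 {1..p}"
      by auto
    then show ?thesis
      by (simp add: preact_def gamma_index_def aug_input_def)
  qed
  then show ?thesis
    unfolding nn_f_def by simp
qed

lemma gamma_index_less:
  assumes "j \<in> {1..k}" "h \<le> p"
  shows "gamma_index p k j h < nn_K p k"
proof -
  obtain j' where j': "j = Suc j'"
    using assms by (cases j) auto
  have "j' * (p + 1) + (p + 1) \<le> k * (p + 1)"
    using assms j' mult_le_mono1[of j k "p + 1"] by simp
  then show ?thesis
    using assms j' unfolding gamma_index_def nn_K_def by (simp add: algebra_simps)
qed

lemma inj_on_gamma_index: "inj_on (\<lambda>(j, h). gamma_index p k j h) ({1..k} \<times> {..p})"
proof (rule inj_onI)
  fix m m' assume m: "m \<in> {1..k} \<times> {..p}" "m' \<in> {1..k} \<times> {..p}"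
    and eq: "(\<lambda>(j, h). gamma_index p k j h) m = (\<lambda>(j, h). gamma_index p k j h) m'"
  obtain j h j' h' where jh: "m = (j, h)" "m' = (j', h')"
    by (cases m, cases m')
  have "(j - 1) * (p + 1) + h = (j' - 1) * (p + 1) + h'" "h < p + 1" "h' < p + 1"
    using eq m by (simp_all add: jh gamma_index_def)
  moreover have "(a * q + b) div q = a" "(a * q + b) mod q = b" if "b < q" for a b q :: nat
    using that by (simp_all add: add.commute[of "a * q"])
  ultimately have "j - 1 = j' - 1" "h = h'"
    by metis+
  then show "m = m'"
    using m by (auto simp: jh)
qed

lemma abs_aug_input_le_1: "x \<in> space (unit_cube_measure p) \<Longrightarrow> h \<le> p \<Longrightarrow> \<bar>aug_input x h\<bar> \<le> 1"
  using unit_cube_coordinate[of x p "h - 1"] by (auto simp: aug_input_def)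

lemma aug_input_measurable [measurable]: "(\<lambda>x. aug_input x h) \<in> borel_measurable (unit_cube_measure p)"
  unfolding aug_input_def by (cases "h = 0") simp_all

lemma preact_measurable [measurable]: "preact p k \<theta> j \<in> borel_measurable (unit_cube_measure p)"
  unfolding preact_def[abs_def] by measurable

lemma nn_f_measurable [measurable]: "nn_f p k \<theta> \<in> borel_measurable (unit_cube_measure p)"
  unfolding nn_f_eq_preact[abs_def] by measurable

lemma preact_diff:
  "preact p k \<theta> j x - preact p k c j x
     = (\<Sum>h\<le>p. (\<theta> (gamma_index p k j h) - c (gamma_index p k j h)) * aug_input x h)"
  unfolding preact_def by (simp add: sum_subtractf[symmetric] algebra_simps)

lemma preact_diff_sq_le:
  assumes "x \<in> space (unit_cube_measure p)"
  shows "(preact p k \<theta> j x - preact p k c j x)\<^sup>2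
           \<le> (real p + 1) * (\<Sum>h\<le>p. (\<theta> (gamma_index p k j h) - c (gamma_index p k j h))\<^sup>2)"
proof -
  have "(\<Sum>h\<le>p. (aug_input x h)\<^sup>2) \<le> (\<Sum>h\<le>p. 1)"
    using abs_aug_input_le_1[OF assms] by (intro sum_mono) (simp add: abs_square_le_1)
  then have "(\<Sum>h\<le>p. (\<theta> (gamma_index p k j h) - c (gamma_index p k j h))\<^sup>2) * (\<Sum>h\<le>p. (aug_input x h)\<^sup>2)
      \<le> (\<Sum>h\<le>p. (\<theta> (gamma_index p k j h) - c (gamma_index p k j h))\<^sup>2) * (real p + 1)"
    by (intro mult_left_mono) (auto intro: sum_nonneg)
  then show ?thesis
    using Cauchy_Schwarz_ineq_sum[of "\<lambda>h. \<theta> (gamma_index p k j h) - c (gamma_index p k j h)"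
        "\<lambda>h. aug_input x h" "{..p}"]
    unfolding preact_diff by (simp add: mult.commute)
qed

text \<open>Coordinates of the parameter vector: \<open>Inl j\<close> is \<open>\<beta>\<^sub>j\<close> and \<open>Inr (j, h)\<close> is \<open>\<gamma>\<^sub>j\<^sub>h\<close>;
  \<open>nn_grad\<close> is the corresponding partial derivative of \<open>f\<^sub>c(x)\<close>.\<close>

definition nn_coords :: "nat \<Rightarrow> nat \<Rightarrow> (nat + nat \<times> nat) set" where
  "nn_coords p k = {..k} <+> {1..k} \<times> {..p}"

definition nn_coord_index :: "nat \<Rightarrow> nat \<Rightarrow> nat + nat \<times> nat \<Rightarrow> nat" where
  "nn_coord_index p k = case_sum id (\<lambda>(j, h). gamma_index p k j h)"

definition nn_grad :: "nat \<Rightarrow> nat \<Rightarrow> (nat \<Rightarrow> real) \<Rightarrow> nat + nat \<times> nat \<Rightarrow> (nat \<Rightarrow> real) \<Rightarrow> real" where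
  "nn_grad p k c m x = (case m of
      Inl j \<Rightarrow> if j = 0 then 1 else psi (preact p k c j x)
    | Inr (j, h) \<Rightarrow> c j * psi' (preact p k c j x) * aug_input x h)"

definition nn_grad_bound :: "(nat \<Rightarrow> real) \<Rightarrow> nat + nat \<times> nat \<Rightarrow> real" where
  "nn_grad_bound c m = (case m of Inl _ \<Rightarrow> 1 | Inr (j, _) \<Rightarrow> \<bar>c j\<bar> / 4)"

definition nn_linear :: "nat \<Rightarrow> nat \<Rightarrow> (nat \<Rightarrow> real) \<Rightarrow> (nat \<Rightarrow> real) \<Rightarrow> (nat \<Rightarrow> real) \<Rightarrow> real" where
  "nn_linear p k c \<theta> x =
     (\<Sum>m\<in>nn_coords p k. nn_grad p k c m x * (\<theta> (nn_coord_index p k m) - c (nn_coord_index p k m)))"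

lemma finite_nn_coords: "finite (nn_coords p k)"
  by (simp add: nn_coords_def)

lemma inj_on_nn_coord_index: "inj_on (nn_coord_index p k) (nn_coords p k)"
proof -
  have coords: "nn_coords p k = Inl ` {..k} \<union> Inr ` ({1..k} \<times> {..p})"
    by (simp add: nn_coords_def Plus_def)
  have "inj_on (nn_coord_index p k) (Inl ` {..k})"
    by (rule inj_onI) (auto simp: nn_coord_index_def)
  moreover have "inj_on (nn_coord_index p k) (Inr ` ({1..k} \<times> {..p}))"
    using inj_on_gamma_index[of p k]
    by (intro inj_on_imageI) (simp add: comp_def nn_coord_index_def)
  moreover have "nn_coord_index p k ` Inl ` {..k} \<inter> nn_coord_index p k ` Inr ` ({1..k} \<times> {..p}) = {}"
    by (auto simp: nn_coord_index_def gamma_index_def)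
  ultimately show ?thesis
    unfolding coords by (auto simp: inj_on_Un)
qed

lemma nn_coord_index_less: "nn_coord_index p k ` nn_coords p k \<subseteq> {..<nn_K p k}"
proof (rule image_subsetI)
  fix m assume "m \<in> nn_coords p k"
  then show "nn_coord_index p k m \<in> {..<nn_K p k}"
    using gamma_index_less[of _ k _ p] by (cases m) (auto simp: nn_coords_def nn_coord_index_def nn_K_def)
qed

lemma nn_grad_measurable [measurable]: "nn_grad p k c m \<in> borel_measurable (unit_cube_measure p)"
  by (cases m) (auto simp: nn_grad_def[abs_def] split: prod.split)

lemma abs_nn_grad_le:
  assumes "m \<in> nn_coords p k" "x \<in> space (unit_cube_measure p)"
  shows "\<bar>nn_grad p k c m x\<bar> \<le> nn_grad_bound c m"
proof (cases m)
  case (Inl j)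
  then show ?thesis
    using abs_psi_le_1 by (simp add: nn_grad_def nn_grad_bound_def)
next
  case (Inr jh)
  then obtain j h where m: "m = Inr (j, h)" and "h \<le> p"
    using assms(1) by (cases jh) (auto simp: nn_coords_def)
  then have "\<bar>psi' (preact p k c j x)\<bar> * \<bar>aug_input x h\<bar> \<le> 1 / 4"
    using mult_mono[OF abs_psi'_le abs_aug_input_le_1[OF assms(2)]] by simp
  then have "\<bar>c j\<bar> * (\<bar>psi' (preact p k c j x)\<bar> * \<bar>aug_input x h\<bar>) \<le> \<bar>c j\<bar> * (1 / 4)"
    by (rule mult_left_mono) simp
  then show ?thesis
    by (simp add: m nn_grad_def nn_grad_bound_def abs_mult mult_ac)
qed

lemma sum_nn_grad_bound_sq:
  "(\<Sum>m\<in>nn_coords p k. (nn_grad_bound c m)\<^sup>2) = real k + 1 + (real p + 1) * (\<Sum>j=1..k. (c j)\<^sup>2) / 16"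
proof -
  have "(\<Sum>m\<in>{1..k} \<times> {..p}. (nn_grad_bound c (Inr m))\<^sup>2) = (\<Sum>j=1..k. \<Sum>h\<le>p. (\<bar>c j\<bar> / 4)\<^sup>2)"
    by (simp add: sum.cartesian_product' nn_grad_bound_def)
  also have "\<dots> = (real p + 1) * (\<Sum>j=1..k. (c j)\<^sup>2) / 16"
    by (simp add: power_divide sum_distrib_left sum_divide_distrib algebra_simps)
  finally show ?thesis
    by (simp add: nn_coords_def sum.Plus comp_def nn_grad_bound_def)
qed

lemma nn_linear_eq:
  "nn_linear p k c \<theta> x = (\<theta> 0 - c 0) + (\<Sum>j=1..k. psi (preact p k c j x) * (\<theta> j - c j))
     + (\<Sum>j=1..k. c j * psi' (preact p k c j x) * (preact p k \<theta> j x - preact p k c j x))"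
proof -
  have "nn_linear p k c \<theta> x = (\<Sum>j\<le>k. nn_grad p k c (Inl j) x * (\<theta> j - c j))
      + (\<Sum>m\<in>{1..k} \<times> {..p}. nn_grad p k c (Inr m) x
          * (\<theta> (gamma_index p k (fst m) (snd m)) - c (gamma_index p k (fst m) (snd m))))"
    unfolding nn_linear_def nn_coords_def by (simp add: sum.Plus nn_coord_index_def comp_def split_def)
  moreover have "{..k} = insert 0 {1..k}"
    by auto
  then have "(\<Sum>j\<le>k. nn_grad p k c (Inl j) x * (\<theta> j - c j))
      = (\<theta> 0 - c 0) + (\<Sum>j=1..k. psi (preact p k c j x) * (\<theta> j - c j))"
    by (simp add: nn_grad_def)
  moreover have "(\<Sum>m\<in>{1..k} \<times> {..p}. nn_grad p k c (Inr m) x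
          * (\<theta> (gamma_index p k (fst m) (snd m)) - c (gamma_index p k (fst m) (snd m))))
      = (\<Sum>j=1..k. \<Sum>h\<le>p. c j * psi' (preact p k c j x)
          * (aug_input x h * (\<theta> (gamma_index p k j h) - c (gamma_index p k j h))))"
    by (simp add: sum.cartesian_product' nn_grad_def split_def mult.assoc)
  moreover have "\<dots> = (\<Sum>j=1..k. c j * psi' (preact p k c j x) * (preact p k \<theta> j x - preact p k c j x))"
    by (simp add: preact_diff sum_distrib_left mult.commute)
  ultimately show ?thesis
    by simp
qed

lemma nn_f_taylor:
  "nn_f p k \<theta> x - nn_f p k c x = nn_linear p k c \<theta> x
     + (\<Sum>j=1..k. (\<theta> j - c j) * (psi (preact p k \<theta> j x) - psi (preact p k c j x)))
     + (\<Sum>j=1..k. c j * (psi (preact p k \<theta> j x) - psi (preact p k c j x)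
          - psi' (preact p k c j x) * (preact p k \<theta> j x - preact p k c j x)))"
proof -
  have "\<theta> j * psi (preact p k \<theta> j x) - c j * psi (preact p k c j x)
      = psi (preact p k c j x) * (\<theta> j - c j)
        + c j * psi' (preact p k c j x) * (preact p k \<theta> j x - preact p k c j x)
        + (\<theta> j - c j) * (psi (preact p k \<theta> j x) - psi (preact p k c j x))
        + c j * (psi (preact p k \<theta> j x) - psi (preact p k c j x)
          - psi' (preact p k c j x) * (preact p k \<theta> j x - preact p k c j x))" for j
    by (simp add: algebra_simps)
  then have "(\<Sum>j=1..k. \<theta> j * psi (preact p k \<theta> j x) - c j * psi (preact p k c j x))
      = (\<Sum>j=1..k. psi (preact p k c j x) * (\<theta> j - c j))
        + (\<Sum>j=1..k. c j * psi' (preact p k c j x) * (preact p k \<theta> j x - preact p k c j x))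
        + (\<Sum>j=1..k. (\<theta> j - c j) * (psi (preact p k \<theta> j x) - psi (preact p k c j x)))
        + (\<Sum>j=1..k. c j * (psi (preact p k \<theta> j x) - psi (preact p k c j x)
          - psi' (preact p k c j x) * (preact p k \<theta> j x - preact p k c j x)))"
    by (simp only: sum.distrib)
  then show ?thesis
    by (simp add: nn_f_eq_preact nn_linear_eq sum_subtractf)
qed

lemma cross_remainder_sq_le:
  assumes "x \<in> space (unit_cube_measure p)"
  shows "(\<Sum>j=1..k. (\<theta> j - c j) * (psi (preact p k \<theta> j x) - psi (preact p k c j x)))\<^sup>2
    \<le> real k * (real p + 1) / 16 * (\<Sum>(j, h)\<in>{1..k} \<times> {..p}.
          (\<theta> j - c j)\<^sup>2 * (\<theta> (gamma_index p k j h) - c (gamma_index p k j h))\<^sup>2)"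
proof -
  define D where "D j = (\<Sum>h\<le>p. (\<theta> (gamma_index p k j h) - c (gamma_index p k j h))\<^sup>2)" for j
  have psi_diff: "(psi (preact p k \<theta> j x) - psi (preact p k c j x))\<^sup>2 \<le> (real p + 1) * D j / 16" for j
  proof -
    have "\<bar>psi (preact p k \<theta> j x) - psi (preact p k c j x)\<bar>\<^sup>2
        \<le> (\<bar>preact p k \<theta> j x - preact p k c j x\<bar> / 4)\<^sup>2"
      using psi_lipschitz by (intro power_mono) auto
    also have "\<dots> \<le> (real p + 1) * D j / 16"
      using preact_diff_sq_le[OF assms, of k \<theta> j c] by (simp add: D_def power_divide)
    finally show ?thesis
      by simp
  qed
  have summand: "((\<theta> j - c j) * (psi (preact p k \<theta> j x) - psi (preact p k c j x)))\<^sup>2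
      \<le> (\<theta> j - c j)\<^sup>2 * ((real p + 1) * D j / 16)" for j
    using mult_left_mono[OF psi_diff[of j] zero_le_power2[of "\<theta> j - c j"]] by (simp add: power_mult_distrib)
  have "(\<Sum>j=1..k. (\<theta> j - c j) * (psi (preact p k \<theta> j x) - psi (preact p k c j x)))\<^sup>2
      \<le> (\<Sum>j=1..k. ((\<theta> j - c j) * (psi (preact p k \<theta> j x) - psi (preact p k c j x)))\<^sup>2) * card {1..k}"
    by (rule sum_squared_le_sum_of_squares)
  also have "\<dots> \<le> (\<Sum>j=1..k. (\<theta> j - c j)\<^sup>2 * ((real p + 1) * D j / 16)) * card {1..k}"
    by (intro mult_right_mono sum_mono summand) simp
  also have "\<dots> = real k * (real p + 1) / 16 * (\<Sum>j=1..k. \<Sum>h\<le>p.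
      (\<theta> j - c j)\<^sup>2 * (\<theta> (gamma_index p k j h) - c (gamma_index p k j h))\<^sup>2)"
    by (simp add: D_def sum_distrib_left sum_distrib_right sum_divide_distrib mult_ac)
  finally show ?thesis
    by (simp only: sum.cartesian_product)
qed

lemma psi_remainder_sq_le:
  assumes "x \<in> space (unit_cube_measure p)"
  shows "(\<Sum>j=1..k. c j * (psi (preact p k \<theta> j x) - psi (preact p k c j x)
            - psi' (preact p k c j x) * (preact p k \<theta> j x - preact p k c j x)))\<^sup>2
    \<le> (\<Sum>i<nn_K p k. (c i)\<^sup>2) * (real p + 1)\<^sup>2 / 16 * (\<Sum>(j, h, h')\<in>{1..k} \<times> {..p} \<times> {..p}.
          (\<theta> (gamma_index p k j h) - c (gamma_index p k j h))\<^sup>2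
          * (\<theta> (gamma_index p k j h') - c (gamma_index p k j h'))\<^sup>2)"
proof -
  define D where "D j = (\<Sum>h\<le>p. (\<theta> (gamma_index p k j h) - c (gamma_index p k j h))\<^sup>2)" for j
  define r where "r j = psi (preact p k \<theta> j x) - psi (preact p k c j x)
    - psi' (preact p k c j x) * (preact p k \<theta> j x - preact p k c j x)" for j
  have r: "(r j)\<^sup>2 \<le> (real p + 1)\<^sup>2 / 16 * (D j)\<^sup>2" for j
  proof -
    have "\<bar>r j\<bar>\<^sup>2 \<le> ((preact p k \<theta> j x - preact p k c j x)\<^sup>2 / 4)\<^sup>2"
      unfolding r_def using psi_taylor_remainder by (intro power_mono) auto
    also have "\<dots> \<le> ((real p + 1) * D j / 4)\<^sup>2"
      using preact_diff_sq_le[OF assms, of k \<theta> j c] by (intro power_mono) (simp_all add: D_def)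
    finally show ?thesis
      by (simp add: power_divide power_mult_distrib)
  qed
  have D_sq: "(D j)\<^sup>2 = (\<Sum>h\<le>p. \<Sum>h'\<le>p.
      (\<theta> (gamma_index p k j h) - c (gamma_index p k j h))\<^sup>2
      * (\<theta> (gamma_index p k j h') - c (gamma_index p k j h'))\<^sup>2)" for j
    unfolding D_def power2_eq_square[of "sum _ _"] by (rule sum_product)
  have "(\<Sum>j=1..k. c j * r j)\<^sup>2 \<le> (\<Sum>j=1..k. (c j)\<^sup>2) * (\<Sum>j=1..k. (r j)\<^sup>2)"
    by (rule Cauchy_Schwarz_ineq_sum)
  also have "\<dots> \<le> (\<Sum>i<nn_K p k. (c i)\<^sup>2) * (\<Sum>j=1..k. (real p + 1)\<^sup>2 / 16 * (D j)\<^sup>2)"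
    using r by (intro mult_mono sum_mono sum_mono2 sum_nonneg) (auto simp: nn_K_def)
  also have "\<dots> = (\<Sum>i<nn_K p k. (c i)\<^sup>2) * ((real p + 1)\<^sup>2 / 16 * (\<Sum>j=1..k. \<Sum>h\<le>p. \<Sum>h'\<le>p.
          (\<theta> (gamma_index p k j h) - c (gamma_index p k j h))\<^sup>2
          * (\<theta> (gamma_index p k j h') - c (gamma_index p k j h'))\<^sup>2))"
    by (simp only: D_sq sum_distrib_left)
  finally show ?thesis
    by (simp only: r_def sum.cartesian_product mult.assoc times_divide_eq_left)
qed

section \<open>The posterior risk bound\<close>

definition nn_remainder_bound :: "nat \<Rightarrow> nat \<Rightarrow> (nat \<Rightarrow> real) \<Rightarrow> (nat \<Rightarrow> real) \<Rightarrow> real" where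
  "nn_remainder_bound p k c \<theta> =
     real k * (real p + 1) / 16 * (\<Sum>(j, h)\<in>{1..k} \<times> {..p}.
       (\<theta> j - c j)\<^sup>2 * (\<theta> (gamma_index p k j h) - c (gamma_index p k j h))\<^sup>2)
   + (\<Sum>i<nn_K p k. (c i)\<^sup>2) * (real p + 1)\<^sup>2 / 16 * (\<Sum>(j, h, h')\<in>{1..k} \<times> {..p} \<times> {..p}.
       (\<theta> (gamma_index p k j h) - c (gamma_index p k j h))\<^sup>2
       * (\<theta> (gamma_index p k j h') - c (gamma_index p k j h'))\<^sup>2)"

lemma power2_sum4_le: "((a::real) + b + c + d)\<^sup>2 \<le> 4 * (a\<^sup>2 + b\<^sup>2 + c\<^sup>2 + d\<^sup>2)"
proof -
  have "0 \<le> (a - b)\<^sup>2 + (a - c)\<^sup>2 + (a - d)\<^sup>2 + (b - c)\<^sup>2 + (b - d)\<^sup>2 + (c - d)\<^sup>2"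
    by simp
  then show ?thesis
    by (simp add: power2_eq_square algebra_simps)
qed

lemma nn_f_diff_sq_le:
  assumes "x \<in> space (unit_cube_measure p)"
  shows "(nn_f p k \<theta> x - f0 x)\<^sup>2 \<le> 4 * (nn_f p k c x - f0 x)\<^sup>2 + 4 * (nn_linear p k c \<theta> x)\<^sup>2
           + 4 * nn_remainder_bound p k c \<theta>"
proof -
  define T2 where "T2 = (\<Sum>j=1..k. (\<theta> j - c j) * (psi (preact p k \<theta> j x) - psi (preact p k c j x)))"
  define T4 where "T4 = (\<Sum>j=1..k. c j * (psi (preact p k \<theta> j x) - psi (preact p k c j x)
    - psi' (preact p k c j x) * (preact p k \<theta> j x - preact p k c j x)))"
  have decomp: "nn_f p k \<theta> x - f0 x = (nn_f p k c x - f0 x) + nn_linear p k c \<theta> x + T2 + T4"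
    using nn_f_taylor[where p = p and k = k and \<theta> = \<theta> and c = c and x = x]
    unfolding T2_def T4_def by linarith
  have "(nn_f p k \<theta> x - f0 x)\<^sup>2
      \<le> 4 * ((nn_f p k c x - f0 x)\<^sup>2 + (nn_linear p k c \<theta> x)\<^sup>2 + T2\<^sup>2 + T4\<^sup>2)"
    unfolding decomp by (rule power2_sum4_le)
  moreover have "T2\<^sup>2 + T4\<^sup>2 \<le> nn_remainder_bound p k c \<theta>"
    unfolding T2_def T4_def nn_remainder_bound_def
    using cross_remainder_sq_le[OF assms] psi_remainder_sq_le[OF assms] by (rule add_mono)
  ultimately show ?thesis
    by (simp add: algebra_simps)
qed

lemma abs_nn_f_le: "\<bar>nn_f p k \<theta> x\<bar> \<le> \<bar>\<theta> 0\<bar> + (\<Sum>j=1..k. \<bar>\<theta> j\<bar>)"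
proof -
  have "\<bar>\<Sum>j=1..k. \<theta> j * psi (preact p k \<theta> j x)\<bar> \<le> (\<Sum>j=1..k. \<bar>\<theta> j * psi (preact p k \<theta> j x)\<bar>)"
    by (rule sum_abs)
  also have "\<dots> \<le> (\<Sum>j=1..k. \<bar>\<theta> j\<bar>)"
  proof (rule sum_mono)
    fix j
    have "\<bar>\<theta> j\<bar> * \<bar>psi (preact p k \<theta> j x)\<bar> \<le> \<bar>\<theta> j\<bar> * 1"
      by (rule mult_left_mono[OF abs_psi_le_1]) simp
    then show "\<bar>\<theta> j * psi (preact p k \<theta> j x)\<bar> \<le> \<bar>\<theta> j\<bar>"
      by (simp add: abs_mult)
  qed
  finally show ?thesis
    unfolding nn_f_eq_preact using abs_triangle_ineq[of "\<theta> 0"] by (meson add_left_mono order_trans)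
qed

lemma integrable_nn_f_diff_sq:
  assumes "square_integrable_cube p f0"
  shows "integrable (unit_cube_measure p) (\<lambda>x. (nn_f p k \<theta> x - f0 x)\<^sup>2)"
proof (rule Bochner_Integration.integrable_bound)
  define C where "C = \<bar>\<theta> 0\<bar> + (\<Sum>j=1..k. \<bar>\<theta> j\<bar>)"
  interpret prob_space "unit_cube_measure p"
    by (rule prob_space_unit_cube_measure)
  note f0 = square_integrable_cubeD[OF assms]
  show "integrable (unit_cube_measure p) (\<lambda>x. 2 * C\<^sup>2 + 2 * (f0 x)\<^sup>2)"
    using f0(2) by simp
  show "(\<lambda>x. (nn_f p k \<theta> x - f0 x)\<^sup>2) \<in> borel_measurable (unit_cube_measure p)"
    using f0(1) by measurable
  have "(nn_f p k \<theta> x - f0 x)\<^sup>2 \<le> 2 * C\<^sup>2 + 2 * (f0 x)\<^sup>2" for x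
  proof -
    have "\<bar>nn_f p k \<theta> x\<bar>\<^sup>2 \<le> C\<^sup>2"
      using abs_nn_f_le[of p k \<theta> x] unfolding C_def by (intro power_mono) auto
    then have "(nn_f p k \<theta> x)\<^sup>2 \<le> C\<^sup>2"
      by simp
    moreover have "0 \<le> (nn_f p k \<theta> x + f0 x)\<^sup>2"
      by simp
    ultimately show ?thesis
      by (simp add: power2_eq_square algebra_simps)
  qed
  then show "AE x in unit_cube_measure p.
      norm ((nn_f p k \<theta> x - f0 x)\<^sup>2) \<le> norm (2 * C\<^sup>2 + 2 * (f0 x)\<^sup>2)"
    by (intro AE_I2) simp
qed

lemma integrable_nn_linear_sq:
  "integrable (unit_cube_measure p) (\<lambda>x. (nn_linear p k c \<theta> x)\<^sup>2)"
  unfolding nn_linear_def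
  by (rule prob_space.integral_sq_linear_combination(1)[OF prob_space_unit_cube_measure
        finite_nn_coords nn_grad_measurable abs_nn_grad_le])

lemma nn_h_le:
  assumes "square_integrable_cube p f0"
  shows "nn_h p k f0 \<theta> \<le> 4 * nn_h p k f0 c + 4 * (\<integral>x. (nn_linear p k c \<theta> x)\<^sup>2 \<partial>unit_cube_measure p)
           + 4 * nn_remainder_bound p k c \<theta>"
proof -
  interpret prob_space "unit_cube_measure p"
    by (rule prob_space_unit_cube_measure)
  note integrable = integrable_nn_f_diff_sq[OF assms] integrable_nn_linear_sq
  have "nn_h p k f0 \<theta> \<le> (\<integral>x. 4 * (nn_f p k c x - f0 x)\<^sup>2 + 4 * (nn_linear p k c \<theta> x)\<^sup>2
      + 4 * nn_remainder_bound p k c \<theta> \<partial>unit_cube_measure p)"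
    unfolding nn_h_def sq_L2_dist_eq_integral
    using integrable nn_f_diff_sq_le by (intro integral_mono) auto
  also have "\<dots> = 4 * nn_h p k f0 c + 4 * (\<integral>x. (nn_linear p k c \<theta> x)\<^sup>2 \<partial>unit_cube_measure p)
      + 4 * nn_remainder_bound p k c \<theta>"
    unfolding nn_h_def sq_L2_dist_eq_integral using integrable by (simp add: prob_space)
  finally show ?thesis .
qed

lemma nn_h_measurable:
  assumes "square_integrable_cube p f0"
  shows "nn_h p k f0 \<in> borel_measurable (param_measure K)"
proof -
  interpret prob_space "unit_cube_measure p"
    by (rule prob_space_unit_cube_measure)
  have [measurable]: "f0 \<in> borel_measurable (unit_cube_measure p)"
    by (rule square_integrable_cubeD(1)[OF assms])
  have "(\<lambda>(\<theta>, x). (nn_f p k \<theta> x - f0 x)\<^sup>2) \<in> borel_measurable (param_measure K \<Otimes>\<^sub>M unit_cube_measure p)"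
    unfolding nn_f_eq_preact preact_def by measurable
  then have "(\<lambda>\<theta>. \<integral>x. (nn_f p k \<theta> x - f0 x)\<^sup>2 \<partial>unit_cube_measure p) \<in> borel_measurable (param_measure K)"
    by (rule borel_measurable_lebesgue_integral)
  then show ?thesis
    unfolding nn_h_def[abs_def] sq_L2_dist_eq_integral .
qed

lemma gauss_prod_nn_linear_sq_le:
  assumes "0 < s" "0 < \<tau>"
  shows "integrable (param_measure (nn_K p k)) (\<lambda>\<theta>.
           (\<integral>x. (nn_linear p k c \<theta> x)\<^sup>2 \<partial>unit_cube_measure p) * gauss_prod s \<tau> (nn_K p k) c \<theta>)"
    and "(\<integral>\<theta>. (\<integral>x. (nn_linear p k c \<theta> x)\<^sup>2 \<partial>unit_cube_measure p) * gauss_prod s \<tau> (nn_K p k) c \<theta>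
           \<partial>param_measure (nn_K p k))
         \<le> \<tau>\<^sup>2 / s * (real k + 1 + (real p + 1) * (\<Sum>i<nn_K p k. (c i)\<^sup>2) / 16)"
proof -
  note linear_form = gauss_prod_sq_linear_form_le[where N = "unit_cube_measure p"
      and S = "nn_coords p k" and \<iota> = "nn_coord_index p k" and K = "nn_K p k"
      and a = "nn_grad p k c" and A = "nn_grad_bound c" and c = c,
      OF prob_space_unit_cube_measure assms finite_nn_coords inj_on_nn_coord_index
      nn_coord_index_less nn_grad_measurable abs_nn_grad_le]
  show "integrable (param_measure (nn_K p k)) (\<lambda>\<theta>.
           (\<integral>x. (nn_linear p k c \<theta> x)\<^sup>2 \<partial>unit_cube_measure p) * gauss_prod s \<tau> (nn_K p k) c \<theta>)"
    using linear_form(1) unfolding nn_linear_def .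
  have "(\<Sum>j=1..k. (c j)\<^sup>2) \<le> (\<Sum>i<nn_K p k. (c i)\<^sup>2)"
    by (intro sum_mono2) (auto simp: nn_K_def)
  then have "\<tau>\<^sup>2 / s * (\<Sum>m\<in>nn_coords p k. (nn_grad_bound c m)\<^sup>2)
      \<le> \<tau>\<^sup>2 / s * (real k + 1 + (real p + 1) * (\<Sum>i<nn_K p k. (c i)\<^sup>2) / 16)"
    unfolding sum_nn_grad_bound_sq using assms by (intro mult_left_mono) (auto simp: divide_right_mono)
  with linear_form(2)[folded nn_linear_def] show "(\<integral>\<theta>. (\<integral>x. (nn_linear p k c \<theta> x)\<^sup>2 \<partial>unit_cube_measure p)
      * gauss_prod s \<tau> (nn_K p k) c \<theta> \<partial>param_measure (nn_K p k))
      \<le> \<tau>\<^sup>2 / s * (real k + 1 + (real p + 1) * (\<Sum>i<nn_K p k. (c i)\<^sup>2) / 16)"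
    by linarith
qed

lemma gauss_prod_nn_remainder_bound_le:
  assumes "0 < s" "0 < \<tau>"
  shows "integrable (param_measure (nn_K p k)) (\<lambda>\<theta>. nn_remainder_bound p k c \<theta> * gauss_prod s \<tau> (nn_K p k) c \<theta>)"
    and "(\<integral>\<theta>. nn_remainder_bound p k c \<theta> * gauss_prod s \<tau> (nn_K p k) c \<theta> \<partial>param_measure (nn_K p k))
         \<le> 3 * (\<tau>\<^sup>2 / s)\<^sup>2 * ((real k)\<^sup>2 * (real p + 1)\<^sup>2
              + (\<Sum>i<nn_K p k. (c i)\<^sup>2) * real k * (real p + 1) ^ 4) / 16"
proof -
  define B where "B = (\<Sum>i<nn_K p k. (c i)\<^sup>2)"
  define g where "g = gauss_prod s \<tau> (nn_K p k) c"
  define R2 where "R2 \<theta> = (\<Sum>(j, h)\<in>{1..k} \<times> {..p}.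
       (\<theta> j - c j)\<^sup>2 * (\<theta> (gamma_index p k j h) - c (gamma_index p k j h))\<^sup>2)" for \<theta>
  define R4 where "R4 \<theta> = (\<Sum>(j, h, h')\<in>{1..k} \<times> {..p} \<times> {..p}.
       (\<theta> (gamma_index p k j h) - c (gamma_index p k j h))\<^sup>2
       * (\<theta> (gamma_index p k j h') - c (gamma_index p k j h'))\<^sup>2)" for \<theta>
  have B: "0 \<le> B"
    unfolding B_def by (simp add: sum_nonneg)
  have cross_idx: "fst ` ({1..k} \<times> {..p}) \<subseteq> {..<nn_K p k}"
    "(\<lambda>(j, h). gamma_index p k j h) ` ({1..k} \<times> {..p}) \<subseteq> {..<nn_K p k}"
    using gamma_index_less by (auto simp: nn_K_def)
  have taylor_idx: "(\<lambda>(j, h, h'). gamma_index p k j h) ` ({1..k} \<times> {..p} \<times> {..p}) \<subseteq> {..<nn_K p k}"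
    "(\<lambda>(j, h, h'). gamma_index p k j h') ` ({1..k} \<times> {..p} \<times> {..p}) \<subseteq> {..<nn_K p k}"
    using gamma_index_less by auto
  have R2: "integrable (param_measure (nn_K p k)) (\<lambda>\<theta>. R2 \<theta> * g \<theta>)"
      "(\<integral>\<theta>. R2 \<theta> * g \<theta> \<partial>param_measure (nn_K p k)) \<le> 3 * (\<tau>\<^sup>2 / s)\<^sup>2 * (real k * (real p + 1))"
    using gauss_prod_sum_sq_sq_le[OF assms _ cross_idx, of c]
    by (simp_all add: R2_def g_def split_def algebra_simps)
  have R4: "integrable (param_measure (nn_K p k)) (\<lambda>\<theta>. R4 \<theta> * g \<theta>)"
      "(\<integral>\<theta>. R4 \<theta> * g \<theta> \<partial>param_measure (nn_K p k)) \<le> 3 * (\<tau>\<^sup>2 / s)\<^sup>2 * (real k * (real p + 1)\<^sup>2)"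
    using gauss_prod_sum_sq_sq_le[OF assms _ taylor_idx, of c]
    by (simp_all add: R4_def g_def split_def power2_eq_square algebra_simps)
  have integrand: "(\<lambda>\<theta>. nn_remainder_bound p k c \<theta> * g \<theta>)
      = (\<lambda>\<theta>. real k * (real p + 1) / 16 * (R2 \<theta> * g \<theta>) + B * (real p + 1)\<^sup>2 / 16 * (R4 \<theta> * g \<theta>))"
    by (simp add: nn_remainder_bound_def R2_def R4_def B_def algebra_simps)
  show "integrable (param_measure (nn_K p k)) (\<lambda>\<theta>. nn_remainder_bound p k c \<theta> * gauss_prod s \<tau> (nn_K p k) c \<theta>)"
    using R2(1) R4(1) by (simp add: integrand[unfolded g_def] g_def)
  have "(\<integral>\<theta>. nn_remainder_bound p k c \<theta> * g \<theta> \<partial>param_measure (nn_K p k))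
      = real k * (real p + 1) / 16 * (\<integral>\<theta>. R2 \<theta> * g \<theta> \<partial>param_measure (nn_K p k))
        + B * (real p + 1)\<^sup>2 / 16 * (\<integral>\<theta>. R4 \<theta> * g \<theta> \<partial>param_measure (nn_K p k))"
    unfolding integrand using R2(1) R4(1) by simp
  also have "\<dots> \<le> real k * (real p + 1) / 16 * (3 * (\<tau>\<^sup>2 / s)\<^sup>2 * (real k * (real p + 1)))
        + B * (real p + 1)\<^sup>2 / 16 * (3 * (\<tau>\<^sup>2 / s)\<^sup>2 * (real k * (real p + 1)\<^sup>2))"
    using R2(2) R4(2) B by (intro add_mono mult_left_mono) auto
  also have "\<dots> = 3 * (\<tau>\<^sup>2 / s)\<^sup>2 * ((real k)\<^sup>2 * (real p + 1)\<^sup>2 + B * real k * (real p + 1) ^ 4) / 16"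
    by algebra
  finally show "(\<integral>\<theta>. nn_remainder_bound p k c \<theta> * gauss_prod s \<tau> (nn_K p k) c \<theta> \<partial>param_measure (nn_K p k))
         \<le> 3 * (\<tau>\<^sup>2 / s)\<^sup>2 * ((real k)\<^sup>2 * (real p + 1)\<^sup>2
              + (\<Sum>i<nn_K p k. (c i)\<^sup>2) * real k * (real p + 1) ^ 4) / 16"
    by (simp add: g_def B_def)
qed

lemma gauss_prod_nn_h_le:
  assumes f0: "square_integrable_cube p f0" and s: "0 < s" "0 < \<tau>"
  shows "integrable (param_measure (nn_K p k)) (\<lambda>\<theta>. nn_h p k f0 \<theta> * gauss_prod s \<tau> (nn_K p k) c \<theta>)"
    and "(\<integral>\<theta>. nn_h p k f0 \<theta> * gauss_prod s \<tau> (nn_K p k) c \<theta> \<partial>param_measure (nn_K p k))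
         \<le> 4 * nn_h p k f0 c
           + 4 * (\<tau>\<^sup>2 / s) * (real k + 1 + (real p + 1) * (\<Sum>i<nn_K p k. (c i)\<^sup>2) / 16)
           + 3 * (\<tau>\<^sup>2 / s)\<^sup>2 * ((real k)\<^sup>2 * (real p + 1)\<^sup>2
               + (\<Sum>i<nn_K p k. (c i)\<^sup>2) * real k * (real p + 1) ^ 4) / 4"
    (is "_ \<le> ?bound")
proof -
  define M where "M = param_measure (nn_K p k)"
  define g where "g = gauss_prod s \<tau> (nn_K p k) c"
  define L where "L \<theta> = (\<integral>x. (nn_linear p k c \<theta> x)\<^sup>2 \<partial>unit_cube_measure p)" for \<theta>
  define Q where "Q \<theta> = 4 * nn_h p k f0 c * g \<theta> + 4 * (L \<theta> * g \<theta>)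
    + 4 * (nn_remainder_bound p k c \<theta> * g \<theta>)" for \<theta>
  note total = gauss_prod_integral[OF s, of "nn_K p k" c, folded g_def M_def]
  note linear = gauss_prod_nn_linear_sq_le[OF s, of p k c, folded g_def M_def L_def]
  note remainder = gauss_prod_nn_remainder_bound_le[OF s, of p k c, folded g_def M_def]
  have Q: "integrable M Q"
    unfolding Q_def using total(1) linear(1) remainder(1) by simp
  have "integral\<^sup>L M Q = 4 * nn_h p k f0 c + 4 * (\<integral>\<theta>. L \<theta> * g \<theta> \<partial>M)
      + 4 * (\<integral>\<theta>. nn_remainder_bound p k c \<theta> * g \<theta> \<partial>M)"
    unfolding Q_def using total linear(1) remainder(1) by simp
  also have "\<dots> \<le> ?bound"
    using linear(2) remainder(2) by simp
  finally have Q_le: "integral\<^sup>L M Q \<le> ?bound" .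
  have h_le: "nn_h p k f0 \<theta> * g \<theta> \<le> Q \<theta>" for \<theta>
    using mult_right_mono[OF nn_h_le[OF f0, of k \<theta> c] gauss_prod_nonneg[of s \<tau>]] s
    by (simp add: Q_def L_def g_def algebra_simps)
  have h_nonneg: "0 \<le> nn_h p k f0 \<theta> * g \<theta>" for \<theta>
    using nn_h_nonneg gauss_prod_nonneg[of s] s by (simp add: g_def)
  have [measurable]: "nn_h p k f0 \<in> borel_measurable (param_measure (nn_K p k))"
    by (rule nn_h_measurable[OF f0])
  have h: "integrable M (\<lambda>\<theta>. nn_h p k f0 \<theta> * g \<theta>)"
  proof (rule Bochner_Integration.integrable_bound[OF Q])
    show "(\<lambda>\<theta>. nn_h p k f0 \<theta> * g \<theta>) \<in> borel_measurable M"
      unfolding M_def g_def by measurable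
    show "AE \<theta> in M. norm (nn_h p k f0 \<theta> * g \<theta>) \<le> norm (Q \<theta>)"
      using h_le h_nonneg by (intro AE_I2) (metis abs_ge_self abs_of_nonneg order_trans real_norm_def)
  qed
  show "integrable (param_measure (nn_K p k)) (\<lambda>\<theta>. nn_h p k f0 \<theta> * gauss_prod s \<tau> (nn_K p k) c \<theta>)"
    using h by (simp add: M_def g_def)
  have "(\<integral>\<theta>. nn_h p k f0 \<theta> * g \<theta> \<partial>M) \<le> integral\<^sup>L M Q"
    using h Q h_le by (intro integral_mono) auto
  then show "(\<integral>\<theta>. nn_h p k f0 \<theta> * gauss_prod s \<tau> (nn_K p k) c \<theta> \<partial>param_measure (nn_K p k)) \<le> ?bound"
    using Q_le by (simp add: M_def g_def)
qed

text \<open>Both priors have \<open>s = 0\<close> at \<open>n = 0\<close>, where the density formula degenerates to \<open>0\<close>;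
  the theorem asserts integrability for that index as well.\<close>

lemma gauss_prod_zero: "gauss_prod 0 \<tau> (nn_K p k) c \<theta> = 0"
  unfolding gauss_prod_def by (simp add: nn_K_def)

lemma integrable_nn_h_gauss_prod:
  assumes "square_integrable_cube p f0" "0 \<le> s" "0 < \<tau>"
  shows "integrable (param_measure (nn_K p k)) (\<lambda>\<theta>. nn_h p k f0 \<theta> * gauss_prod s \<tau> (nn_K p k) c \<theta>)"
proof (cases "s = 0")
  case True
  then show ?thesis
    by (simp add: gauss_prod_zero)
next
  case False
  then show ?thesis
    using gauss_prod_nn_h_le(1)[OF assms(1) _ assms(3)] assms(2) by simp
qed

section \<open>Asymptotics\<close>

lemma powr_neg_bigo_1: "0 \<le> \<delta> \<Longrightarrow> (\<lambda>n::nat. real n powr - \<delta>) \<in> O(\<lambda>_. 1)"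
proof (intro bigoI[where c = 1] eventually_mono[OF eventually_ge_at_top[of 1]])
  fix n :: nat assume "0 \<le> \<delta>" "1 \<le> n"
  then have "real n powr - \<delta> \<le> real n powr 0"
    by (intro powr_mono) auto
  then show "norm (real n powr - \<delta>) \<le> 1 * norm (1 :: real)"
    using \<open>1 \<le> n\<close> by simp
qed

lemma powr_smallo_powr: "e < d \<Longrightarrow> (\<lambda>n::nat. real n powr e) \<in> o(\<lambda>n. real n powr d)"
  by (rule powr_smallo_iff[THEN iffD2]) (auto intro: filterlim_real_sequentially)

lemma bigo_powr_mult:
  fixes f g :: "nat \<Rightarrow> real"
  assumes "f \<in> O(\<lambda>n. real n powr a)" "g \<in> O(\<lambda>n. real n powr b)"
  shows "(\<lambda>n. f n * g n) \<in> O(\<lambda>n. real n powr (a + b))"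
  using landau_o.big.mult[OF assms] by (simp add: powr_add)

lemma bigo_smallo_powr_mult:
  fixes f g :: "nat \<Rightarrow> real"
  assumes "f \<in> O(\<lambda>n. real n powr a)" "g \<in> o(\<lambda>n. real n powr b)"
  shows "(\<lambda>n. f n * g n) \<in> o(\<lambda>n. real n powr (a + b))"
  using landau_o.big_small_mult[OF assms] by (simp add: powr_add)

lemma divide_powr_bigo:
  assumes "q \<le> r"
  shows "(\<lambda>n::nat. C / real n powr r) \<in> O(\<lambda>n. real n powr - q)"
proof -
  have "(\<lambda>n::nat. C / real n powr r) = (\<lambda>n. C * real n powr - r)"
    by (rule ext) (subst powr_minus, simp add: divide_inverse)
  moreover have "(\<lambda>n::nat. real n powr - r) \<in> O(\<lambda>n. real n powr - q)"
    using assms by (intro powr_bigo_iff[THEN iffD2] filterlim_real_sequentially) auto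
  ultimately show ?thesis
    by (cases "C = 0") simp_all
qed

lemma smallo_of_sqrt_smallo:
  fixes f F :: "nat \<Rightarrow> real"
  assumes "(\<lambda>n. sqrt (f n)) \<in> o(F)" "F \<in> O(\<lambda>_. 1)" "\<And>n. 0 \<le> f n"
  shows "f \<in> o(F)"
proof -
  have "(\<lambda>n. sqrt (f n) * sqrt (f n)) \<in> o(\<lambda>n. F n * 1)"
    using assms(1) landau_o.big_trans[OF landau_o.small_imp_big[OF assms(1)] assms(2)]
    by (rule landau_o.small_big_mult)
  then show ?thesis
    using assms(3) by simp
qed

lemma risk_bound_smallo:
  fixes F h0 \<sigma>2 B :: "nat \<Rightarrow> real" and k :: "nat \<Rightarrow> nat"
  assumes F: "F \<in> O(\<lambda>_. 1)" and h0: "h0 \<in> o(F)"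
    and \<sigma>2: "eventually (\<lambda>n. 0 \<le> \<sigma>2 n) at_top"
    and k: "(\<lambda>n. \<sigma>2 n * (real (k n) + 1)) \<in> o(F)" and B: "(\<lambda>n. \<sigma>2 n * B n) \<in> o(F)"
  shows "(\<lambda>n. 4 * h0 n + 4 * \<sigma>2 n * (real (k n) + 1 + (real p + 1) * B n / 16)
           + 3 * (\<sigma>2 n)\<^sup>2 * ((real (k n))\<^sup>2 * (real p + 1)\<^sup>2 + B n * real (k n) * (real p + 1) ^ 4) / 4)
         \<in> o(F)"
proof -
  have "(\<lambda>n. \<sigma>2 n * real (k n)) \<in> O(\<lambda>n. \<sigma>2 n * (real (k n) + 1))"
    using \<sigma>2 by (intro landau_o.big_mono) (auto elim!: eventually_mono simp: mult_left_mono)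
  then have \<sigma>2_k: "(\<lambda>n. \<sigma>2 n * real (k n)) \<in> o(F)"
    using k by (rule landau_o.big_small_trans)
  then have bounded: "(\<lambda>n. \<sigma>2 n * real (k n)) \<in> O(\<lambda>_. 1)"
    using F by (blast intro: landau_o.big_trans landau_o.small_imp_big)
  have "(\<lambda>n. (\<sigma>2 n * real (k n)) * (\<sigma>2 n * real (k n))) \<in> o(\<lambda>n. F n * 1)"
    by (rule landau_o.small_big_mult[OF \<sigma>2_k bounded])
  moreover have "(\<lambda>n. (\<sigma>2 n * B n) * (\<sigma>2 n * real (k n))) \<in> o(\<lambda>n. F n * 1)"
    by (rule landau_o.small_big_mult[OF B bounded])
  ultimately have "(\<lambda>n. 4 * h0 n + 4 * (\<sigma>2 n * (real (k n) + 1)) + (real p + 1) / 4 * (\<sigma>2 n * B n)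
      + 3 * (real p + 1)\<^sup>2 / 4 * ((\<sigma>2 n * real (k n)) * (\<sigma>2 n * real (k n)))
      + 3 * (real p + 1) ^ 4 / 4 * ((\<sigma>2 n * B n) * (\<sigma>2 n * real (k n)))) \<in> o(F)"
    using h0 k B by (intro sum_in_smallo landau_o.small.mult_left) auto
  then show ?thesis
    by (simp add: power2_eq_square algebra_simps add_divide_distrib)
qed

lemma gauss_prod_nn_h_smallo:
  fixes s F :: "nat \<Rightarrow> real" and k :: "nat \<Rightarrow> nat" and c :: "nat \<Rightarrow> nat \<Rightarrow> real"
  assumes f0: "square_integrable_cube p f0" and \<tau>: "0 < \<tau>"
    and s: "eventually (\<lambda>n. 0 < s n) at_top" and F: "F \<in> O(\<lambda>_. 1)"
    and h0: "(\<lambda>n. nn_h p (k n) f0 (c n)) \<in> o(F)"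
    and k: "(\<lambda>n. \<tau>\<^sup>2 / s n * (real (k n) + 1)) \<in> o(F)"
    and B: "(\<lambda>n. \<tau>\<^sup>2 / s n * (\<Sum>i<nn_K p (k n). (c n i)\<^sup>2)) \<in> o(F)"
  shows "(\<lambda>n. \<integral>\<theta>. nn_h p (k n) f0 \<theta> * gauss_prod (s n) \<tau> (nn_K p (k n)) (c n) \<theta>
            \<partial>param_measure (nn_K p (k n))) \<in> o(F)"
    (is "?risk \<in> o(F)")
proof -
  define B where "B n = (\<Sum>i<nn_K p (k n). (c n i)\<^sup>2)" for n
  define bound where "bound n = 4 * nn_h p (k n) f0 (c n)
    + 4 * (\<tau>\<^sup>2 / s n) * (real (k n) + 1 + (real p + 1) * B n / 16)
    + 3 * (\<tau>\<^sup>2 / s n)\<^sup>2 * ((real (k n))\<^sup>2 * (real p + 1)\<^sup>2 + B n * real (k n) * (real p + 1) ^ 4) / 4"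
    for n
  have "eventually (\<lambda>n. norm (?risk n) \<le> norm (bound n)) at_top"
    using s
  proof eventually_elim
    case (elim n)
    have "0 \<le> ?risk n"
      using elim nn_h_nonneg gauss_prod_nonneg[of "s n"] by (intro integral_nonneg_AE AE_I2) simp
    moreover have "?risk n \<le> bound n"
      unfolding bound_def B_def by (rule gauss_prod_nn_h_le(2)[OF f0 elim \<tau>])
    ultimately show ?case
      by simp
  qed
  then have "?risk \<in> O(bound)"
    by (rule landau_o.big_mono)
  moreover have "eventually (\<lambda>n. 0 \<le> \<tau>\<^sup>2 / s n) at_top"
    using s by (auto elim: eventually_mono)
  then have "bound \<in> o(F)"
    unfolding bound_def B_def by (rule risk_bound_smallo[where p = p, OF F h0 _ k B])
  ultimately show ?thesis
    by (rule landau_o.big_small_trans)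
qed

text \<open>Both priors of the theorem have variance \<open>O(1/n)\<close>; they differ only in how
  \<open>\<sigma>\<^sup>2 |\<theta>0|\<^sup>2 = o(n\<^sup>-\<^sup>\<delta>)\<close> is obtained.\<close>

lemma gauss_prod_nn_h_smallo_powr:
  fixes s :: "nat \<Rightarrow> real" and k :: "nat \<Rightarrow> nat" and c :: "nat \<Rightarrow> nat \<Rightarrow> real"
  assumes f0: "square_integrable_cube p f0" and \<tau>: "0 < \<tau>"
    and a: "0 \<le> a" and \<delta>: "0 \<le> \<delta>" "\<delta> < 1 - a" and k: "(\<lambda>n. real (k n)) \<in> O(\<lambda>n. real n powr a)"
    and h0: "(\<lambda>n. nn_h p (k n) f0 (c n)) \<in> o(\<lambda>n. real n powr - \<delta>)"
    and s: "eventually (\<lambda>n. 0 < s n) at_top" "(\<lambda>n. \<tau>\<^sup>2 / s n) \<in> O(\<lambda>n. real n powr - 1)"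
    and B: "(\<lambda>n. \<tau>\<^sup>2 / s n * (\<Sum>i<nn_K p (k n). (c n i)\<^sup>2)) \<in> o(\<lambda>n. real n powr - \<delta>)"
  shows "(\<lambda>n. \<integral>\<theta>. nn_h p (k n) f0 \<theta> * gauss_prod (s n) \<tau> (nn_K p (k n)) (c n) \<theta>
           \<partial>param_measure (nn_K p (k n))) \<in> o(\<lambda>n. real n powr - \<delta>)"
proof (rule gauss_prod_nn_h_smallo[OF f0 \<tau> s(1) powr_neg_bigo_1[OF \<delta>(1)] h0 _ B])
  have "(\<lambda>_. 1) \<in> O(\<lambda>n::nat. real n powr a)"
  proof (intro bigoI[where c = 1] eventually_mono[OF eventually_ge_at_top[of 1]])
    fix n :: nat assume "1 \<le> n"
    then show "norm (1 :: real) \<le> 1 * norm (real n powr a)"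
      using a ge_one_powr_ge_zero[of "real n" a] by simp
  qed
  then have "(\<lambda>n. real (k n) + 1) \<in> O(\<lambda>n. real n powr a)"
    using k by (rule sum_in_bigo(1)[rotated])
  then have "(\<lambda>n. \<tau>\<^sup>2 / s n * (real (k n) + 1)) \<in> O(\<lambda>n. real n powr (- 1 + a))"
    by (rule bigo_powr_mult[OF s(2)])
  also have "(\<lambda>n. real n powr (- 1 + a)) \<in> o(\<lambda>n. real n powr - \<delta>)"
    using \<delta> by (intro powr_smallo_powr) simp
  finally show "(\<lambda>n. \<tau>\<^sup>2 / s n * (real (k n) + 1)) \<in> o(\<lambda>n. real n powr - \<delta>)" .
qed

theorem lemma9:
  fixes p :: nat and k :: "nat \<Rightarrow> nat" and a \<delta> \<tau> :: real
    and f0 :: "(nat \<Rightarrow> real) \<Rightarrow> real" and \<theta>0 :: "nat \<Rightarrow> nat \<Rightarrow> real"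
  assumes f0: "square_integrable_cube p f0"
    and a: "0 < a" "a < 1"
    and kn: "(\<lambda>n. real (k n)) \<sim>[at_top] (\<lambda>n. real n powr a)"
    and \<delta>: "0 \<le> \<delta>" "\<delta> < 1 - a"
    and A1: "(\<lambda>n. sqrt (nn_h p (k n) f0 (\<theta>0 n))) \<in> o(\<lambda>n. real n powr (- \<delta>))"
    and \<tau>: "0 < \<tau>"
  shows
    "((\<lambda>n. \<Sum>i<nn_K p (k n). (\<theta>0 n i)\<^sup>2) \<in> o(\<lambda>n. real n powr (1 - \<delta>)) \<longrightarrow>
        (\<forall>n. integrable (param_measure (nn_K p (k n)))
               (\<lambda>\<theta>. nn_h p (k n) f0 \<theta> * gauss_prod (real n) \<tau> (nn_K p (k n)) (\<theta>0 n) \<theta>)) \<and>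
        (\<lambda>n. \<integral>\<theta>. nn_h p (k n) f0 \<theta> * gauss_prod (real n) \<tau> (nn_K p (k n)) (\<theta>0 n) \<theta>
               \<partial>param_measure (nn_K p (k n))) \<in> o(\<lambda>n. real n powr (- \<delta>)))
     \<and>
     (\<forall>v::real. v \<ge> 1 \<longrightarrow>
       (\<lambda>n. \<Sum>i<nn_K p (k n). (\<theta>0 n i)\<^sup>2) \<in> O(\<lambda>n. real n powr v) \<longrightarrow>
        (\<forall>n. integrable (param_measure (nn_K p (k n)))
               (\<lambda>\<theta>. nn_h p (k n) f0 \<theta> * gauss_prod (real n powr (v + 1)) \<tau> (nn_K p (k n)) (\<theta>0 n) \<theta>)) \<and>
        (\<lambda>n. \<integral>\<theta>. nn_h p (k n) f0 \<theta> * gauss_prod (real n powr (v + 1)) \<tau> (nn_K p (k n)) (\<theta>0 n) \<theta>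
               \<partial>param_measure (nn_K p (k n))) \<in> o(\<lambda>n. real n powr (- \<delta>)))"
proof -
  have h0: "(\<lambda>n. nn_h p (k n) f0 (\<theta>0 n)) \<in> o(\<lambda>n. real n powr - \<delta>)"
    using smallo_of_sqrt_smallo[OF A1 powr_neg_bigo_1[OF \<delta>(1)] nn_h_nonneg] .
  have k: "(\<lambda>n. real (k n)) \<in> O(\<lambda>n. real n powr a)"
    using asymp_equiv_imp_bigtheta[OF kn] by blast
  note risk = gauss_prod_nn_h_smallo_powr[OF f0 \<tau> less_imp_le[OF a(1)] \<delta> k h0]
  have positive: "eventually (\<lambda>n. 0 < f n) at_top" if "\<And>n. 0 < n \<Longrightarrow> 0 < f n" for f :: "nat \<Rightarrow> real"
    using that by (auto intro: eventually_mono[OF eventually_gt_at_top[of 0]])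
  have variance_n: "(\<lambda>n. \<tau>\<^sup>2 / real n) \<in> O(\<lambda>n. real n powr - 1)"
    using divide_powr_bigo[of 1 1 "\<tau>\<^sup>2"] by simp
  have variance_v: "(\<lambda>n. \<tau>\<^sup>2 / real n powr (v + 1)) \<in> O(\<lambda>n. real n powr - q)" if "q \<le> v + 1" for v q
    using that by (rule divide_powr_bigo)
  have centre_n: "(\<lambda>n. \<tau>\<^sup>2 / real n * (\<Sum>i<nn_K p (k n). (\<theta>0 n i)\<^sup>2)) \<in> o(\<lambda>n. real n powr - \<delta>)"
    if "(\<lambda>n. \<Sum>i<nn_K p (k n). (\<theta>0 n i)\<^sup>2) \<in> o(\<lambda>n. real n powr (1 - \<delta>))"
    using bigo_smallo_powr_mult[OF variance_n that] by simp
  have centre_v: "(\<lambda>n. \<tau>\<^sup>2 / real n powr (v + 1) * (\<Sum>i<nn_K p (k n). (\<theta>0 n i)\<^sup>2))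
      \<in> o(\<lambda>n. real n powr - \<delta>)"
    if "(\<lambda>n. \<Sum>i<nn_K p (k n). (\<theta>0 n i)\<^sup>2) \<in> O(\<lambda>n. real n powr v)" for v
  proof -
    have "(\<lambda>n. real n powr (- (v + 1) + v)) \<in> o(\<lambda>n. real n powr - \<delta>)"
      using \<delta> a by (intro powr_smallo_powr) simp
    then show ?thesis
      by (rule landau_o.big_small_trans[OF bigo_powr_mult[OF variance_v[OF order_refl] that]])
  qed
  show ?thesis
    by (auto intro!: risk integrable_nn_h_gauss_prod[OF f0 _ \<tau>]
        variance_n centre_n variance_v centre_v positive)
qed

end
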